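(* Let $K'/K$ be a finite Galois extension inside $\bar K$. Suppose $M/K$ is obtained by nontrivial strong cluster magnification from a subextension $L/K$ with magnification factor $d$, and suppose $\tilde M$ and $K'$ are linearly disjoint over $K$. Then $MK'/K'$ is obtained by nontrivial strong cluster magnification from $LK'/K'$ with the same magnification factor $d$. Furthermore, $MK'/K$ is obtained by strong cluster magnification from $M/K$ and $LK'/K$ is obtained by strong cluster magnification from $L/K$, and these magnifications are nontrivial if $[K':K]>1$.
   Context: $K$ is a perfect field with a fixed algebraic closure $\bar K$; all extensions are finite and contained in $\bar K$; $\tilde L$ denotes the Galois closure of $L$ over the relevant base field in $\bar K$. Definition: for a base field $E$, $M/E$ is obtained by strong cluster magnification from a subextension $L/E$ ($E\subseteq L\subseteq M$) if $[L:E]>2$, and there is a finite Galois extension $F/E$ with the Galois closure of $L/E$ and $F$ linearly disjoint over $E$ and $LF=M$. $[F:E]$ is the magnification factor; the magnification is nontrivial if $F\ne E$. *)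

theory Defs
  imports "HOL-Computational_Algebra.Polynomial" "HOL-Computational_Algebra.Primes"
begin

text \<open>The ambient type 'a (a field) plays the role of the algebraic closure of K.
  Subfields are subsets of 'a.\<close>

definition subfield :: "'a::field set \<Rightarrow> bool" where
  "subfield F \<longleftrightarrow> 0 \<in> F \<and> 1 \<in> F \<and> (\<forall>x\<in>F. \<forall>y\<in>F. x + y \<in> F \<and> x * y \<in> F)
     \<and> (\<forall>x\<in>F. - x \<in> F) \<and> (\<forall>x\<in>F. x \<noteq> 0 \<longrightarrow> inverse x \<in> F)"

definition lin_indep_over :: "'a::field set \<Rightarrow> 'a set \<Rightarrow> bool" where
  "lin_indep_over E S \<longleftrightarrow> finite S \<and>
     (\<forall>c. (\<forall>b\<in>S. c b \<in> E) \<longrightarrow> (\<Sum>b\<in>S. c b * b) = 0 \<longrightarrow> (\<forall>b\<in>S. c b = 0))"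

definition span_over :: "'a::field set \<Rightarrow> 'a set \<Rightarrow> 'a set" where
  "span_over E S = {\<Sum>b\<in>S. c b * b | c. \<forall>b\<in>S. c b \<in> E}"

definition is_basis_over :: "'a::field set \<Rightarrow> 'a set \<Rightarrow> 'a set \<Rightarrow> bool" where
  "is_basis_over E L B \<longleftrightarrow> finite B \<and> B \<subseteq> L \<and> lin_indep_over E B \<and> span_over E B = L"

definition finite_ext :: "'a::field set \<Rightarrow> 'a set \<Rightarrow> bool" where
  "finite_ext E L \<longleftrightarrow> subfield E \<and> subfield L \<and> E \<subseteq> L \<and> (\<exists>B. is_basis_over E L B)"

text \<open>Degree [L:E] (cardinality of a basis; meaningful for finite extensions).\<close>
definition ext_degree :: "'a::field set \<Rightarrow> 'a set \<Rightarrow> nat" where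
  "ext_degree E L = card (SOME B. is_basis_over E L B)"

definition Aut_over :: "'a::field set \<Rightarrow> 'a set \<Rightarrow> ('a \<Rightarrow> 'a) set" where
  "Aut_over E L = {\<sigma>. bij_betw \<sigma> L L \<and>
      (\<forall>x\<in>L. \<forall>y\<in>L. \<sigma> (x + y) = \<sigma> x + \<sigma> y \<and> \<sigma> (x * y) = \<sigma> x * \<sigma> y) \<and>
      (\<forall>x\<in>E. \<sigma> x = x)}"

definition galois_ext :: "'a::field set \<Rightarrow> 'a set \<Rightarrow> bool" where
  "galois_ext E L \<longleftrightarrow> finite_ext E L \<and> {x\<in>L. \<forall>\<sigma>\<in>Aut_over E L. \<sigma> x = x} = E"

definition galois_closure :: "'a::field set \<Rightarrow> 'a set \<Rightarrow> 'a set" where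
  "galois_closure E L = \<Inter>{N. galois_ext E N \<and> L \<subseteq> N}"

definition compositum :: "'a::field set \<Rightarrow> 'a set \<Rightarrow> 'a set" where
  "compositum A B = \<Inter>{N. subfield N \<and> A \<union> B \<subseteq> N}"

definition lin_disjoint :: "'a::field set \<Rightarrow> 'a set \<Rightarrow> 'a set \<Rightarrow> bool" where
  "lin_disjoint E A B \<longleftrightarrow> (\<forall>S. S \<subseteq> A \<longrightarrow> lin_indep_over E S \<longrightarrow> lin_indep_over B S)"

text \<open>M/E obtained by strong cluster magnification from L/E, witnessed by the Galois extension F/E.
  The magnification factor is [F:E]; it is nontrivial iff F \<noteq> E.\<close>
definition scm_via :: "'a::field set \<Rightarrow> 'a set \<Rightarrow> 'a set \<Rightarrow> 'a set \<Rightarrow> bool" where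
  "scm_via E L M F \<longleftrightarrow> finite_ext E L \<and> finite_ext E M \<and> L \<subseteq> M \<and> ext_degree E L > 2 \<and>
     galois_ext E F \<and> lin_disjoint E (galois_closure E L) F \<and> compositum L F = M"

definition perfect_field :: "'a::field set \<Rightarrow> bool" where
  "perfect_field K \<longleftrightarrow> subfield K \<and>
     ((\<forall>n::nat. n > 0 \<longrightarrow> (of_nat n :: 'a) \<noteq> 0) \<or>
      (\<exists>p::nat. prime p \<and> (of_nat p :: 'a) = 0 \<and> (\<forall>x\<in>K. \<exists>y\<in>K. y ^ p = x)))"

definition alg_closed_type :: "'a::field itself \<Rightarrow> bool" where
  "alg_closed_type _ \<longleftrightarrow> (\<forall>p::'a poly. degree p > 0 \<longrightarrow> (\<exists>x. poly p x = 0))"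

definition algebraic_over :: "'a::field set \<Rightarrow> 'a \<Rightarrow> bool" where
  "algebraic_over K x \<longleftrightarrow> (\<exists>p. p \<noteq> 0 \<and> (\<forall>i. coeff p i \<in> K) \<and> poly p x = 0)"

definition is_alg_closure_of :: "'a::field set \<Rightarrow> bool" where
  "is_alg_closure_of K \<longleftrightarrow> perfect_field K \<and> alg_closed_type TYPE('a) \<and> (\<forall>x. algebraic_over K x)"

end

(* Let F/K be the Galois extension witnessing the magnification of M from L, and write L~, M~
   for Galois closures over K. Linear disjointness of M~ and K' over K means that K-bases of the
   subfields L, M, F, L~ of M~ stay linearly independent over K', so they are K'-bases of the
   composita with K'; in particular degrees are preserved. Extending automorphisms K'-linearly
   along such a basis shows that FK'/K' and L~K'/K' are Galois, and L~K' contains the Galois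
   closure of LK'/K'. Products of K-bases of L~ and F are K-independent (L~ and F are linearly
   disjoint) and lie in M~, hence stay independent over K'; this makes L~K' and FK' linearly
   disjoint over K'. Finally LK' FK' = (LF)K' = MK', and FK' differs from K' because M~ and K'
   intersect in K, which does not contain F. For the other two magnifications K' itself is the
   Galois witness. *)

theory Submission
  imports Defs
begin

section \<open>Subfields, composita and Galois closures\<close>

lemma subfield_0: "subfield E \<Longrightarrow> 0 \<in> E" by (simp add: subfield_def)

lemma subfield_1: "subfield E \<Longrightarrow> 1 \<in> E" by (simp add: subfield_def)

lemma subfield_add: "subfield E \<Longrightarrow> x \<in> E \<Longrightarrow> y \<in> E \<Longrightarrow> x + y \<in> E" by (simp add: subfield_def)

lemma subfield_mult: "subfield E \<Longrightarrow> x \<in> E \<Longrightarrow> y \<in> E \<Longrightarrow> x * y \<in> E" by (simp add: subfield_def)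

lemma subfield_uminus: "subfield E \<Longrightarrow> x \<in> E \<Longrightarrow> - x \<in> E" by (simp add: subfield_def)

lemma subfield_inverse: "subfield E \<Longrightarrow> x \<in> E \<Longrightarrow> inverse x \<in> E"
  by (cases "x = 0") (auto simp: subfield_def)

lemma subfield_diff: "subfield E \<Longrightarrow> x \<in> E \<Longrightarrow> y \<in> E \<Longrightarrow> x - y \<in> E"
  using subfield_add[of E x "- y"] subfield_uminus[of E y] by simp

lemma subfield_divide: "subfield E \<Longrightarrow> x \<in> E \<Longrightarrow> y \<in> E \<Longrightarrow> x / y \<in> E"
  using subfield_mult[of E x "inverse y"] subfield_inverse[of E y] by (simp add: divide_inverse)

lemma sum_closed:
  assumes "0 \<in> W" "\<And>x y. x \<in> W \<Longrightarrow> y \<in> W \<Longrightarrow> x + y \<in> W" "\<And>i. i \<in> I \<Longrightarrow> f i \<in> W"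
  shows "sum f I \<in> W"
  using assms(3) by (induction I rule: infinite_finite_induct) (auto simp: assms(1,2))

lemma subfield_sum: "subfield E \<Longrightarrow> (\<And>i. i \<in> I \<Longrightarrow> f i \<in> E) \<Longrightarrow> sum f I \<in> E"
  by (rule sum_closed) (auto simp: subfield_0 subfield_add)

lemma subfield_Inter: "(\<And>N. N \<in> NN \<Longrightarrow> subfield N) \<Longrightarrow> subfield (\<Inter>NN)"
  unfolding subfield_def by blast

lemma subfield_compositum: "subfield (compositum A B)"
  unfolding compositum_def by (rule subfield_Inter) auto

lemma subset_compositum1: "A \<subseteq> compositum A B"
  unfolding compositum_def by auto

lemma subset_compositum2: "B \<subseteq> compositum A B"
  unfolding compositum_def by auto

lemma compositum_least: "subfield N \<Longrightarrow> A \<subseteq> N \<Longrightarrow> B \<subseteq> N \<Longrightarrow> compositum A B \<subseteq> N"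
  unfolding compositum_def by auto

lemma compositum_mono: "A \<subseteq> A' \<Longrightarrow> B \<subseteq> B' \<Longrightarrow> compositum A B \<subseteq> compositum A' B'"
  by (intro compositum_least subfield_compositum)
    (use subset_compositum1[of A' B'] subset_compositum2[of B' A'] in auto)

lemma compositum_commute: "compositum A B = compositum B A"
  unfolding compositum_def by (simp add: Un_commute)

lemma compositum_base_change:
  "compositum (compositum A C) (compositum B C) = compositum (compositum A B) C"
proof (rule subset_antisym)
  show "compositum (compositum A C) (compositum B C) \<subseteq> compositum (compositum A B) C"
    by (intro compositum_least subfield_compositum compositum_mono order_refl
        subset_compositum1 subset_compositum2)
  let ?N = "compositum (compositum A C) (compositum B C)"
  have "A \<subseteq> ?N" "B \<subseteq> ?N" "C \<subseteq> ?N"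
    using subset_compositum1[of A C] subset_compositum1[of "compositum A C" "compositum B C"]
      subset_compositum1[of B C] subset_compositum2[of "compositum B C" "compositum A C"]
      subset_compositum2[of C A] by auto
  then show "compositum (compositum A B) C \<subseteq> ?N"
    by (intro compositum_least subfield_compositum)
qed

lemma galois_closure_least: "galois_ext E N \<Longrightarrow> L \<subseteq> N \<Longrightarrow> galois_closure E L \<subseteq> N"
  unfolding galois_closure_def by auto

lemma subset_galois_closure: "L \<subseteq> galois_closure E L"
  unfolding galois_closure_def by auto

lemma galois_closure_mono: "L \<subseteq> M \<Longrightarrow> galois_closure E L \<subseteq> galois_closure E M"
  unfolding galois_closure_def by auto

lemma subfield_galois_closure: "subfield (galois_closure E L)"
  unfolding galois_closure_def galois_ext_def finite_ext_def by (rule subfield_Inter) auto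

section \<open>Linear algebra over a subfield\<close>

lemma lin_indep_overD:
  "lin_indep_over E S \<Longrightarrow> (\<And>i. i \<in> S \<Longrightarrow> c i \<in> E) \<Longrightarrow> (\<Sum>i\<in>S. c i * i) = 0 \<Longrightarrow> i \<in> S \<Longrightarrow> c i = 0"
  unfolding lin_indep_over_def by blast

lemma lin_indep_over_finite: "lin_indep_over E S \<Longrightarrow> finite S"
  by (simp add: lin_indep_over_def)

lemma lin_indep_over_pair:
  assumes E: "subfield E" and f: "f \<notin> E"
  shows "lin_indep_over E {1, f}"
  unfolding lin_indep_over_def
proof (intro conjI allI impI ballI)
  show "finite {1, f}" by simp
  have "f \<noteq> 1" using f subfield_1[OF E] by auto
  fix c x assume c: "\<forall>b\<in>{1, f}. c b \<in> E" and "(\<Sum>b\<in>{1, f}. c b * b) = 0" and x: "x \<in> {1, f}"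
  then have sum0: "c 1 + c f * f = 0" using \<open>f \<noteq> 1\<close> by simp
  have "c f = 0"
  proof (rule ccontr)
    assume "c f \<noteq> 0"
    then have "f = - c 1 / c f" using sum0 by (simp add: field_simps eq_neg_iff_add_eq_0 add.commute)
    moreover have "- c 1 / c f \<in> E" using c by (auto intro!: subfield_divide[OF E] subfield_uminus[OF E])
    ultimately show False using f by simp
  qed
  with sum0 x show "c x = 0" by auto
qed

definition lin_indep_family_over :: "'a::field set \<Rightarrow> 'b set \<Rightarrow> ('b \<Rightarrow> 'a) \<Rightarrow> bool" where
  "lin_indep_family_over E I v \<longleftrightarrow> finite I \<and>
     (\<forall>c. (\<forall>i\<in>I. c i \<in> E) \<longrightarrow> (\<Sum>i\<in>I. c i * v i) = 0 \<longrightarrow> (\<forall>i\<in>I. c i = 0))"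

lemma lin_indep_over_iff_family: "lin_indep_over E S \<longleftrightarrow> lin_indep_family_over E S id"
  unfolding lin_indep_over_def lin_indep_family_over_def by simp

lemma lin_indep_family_overD:
  "lin_indep_family_over E I v \<Longrightarrow> (\<And>i. i \<in> I \<Longrightarrow> c i \<in> E) \<Longrightarrow> (\<Sum>i\<in>I. c i * v i) = 0 \<Longrightarrow>
    i \<in> I \<Longrightarrow> c i = 0"
  unfolding lin_indep_family_over_def by blast

lemma lin_indep_family_over_finite: "lin_indep_family_over E I v \<Longrightarrow> finite I"
  by (simp add: lin_indep_family_over_def)

lemma lin_indep_family_over_nonzero:
  assumes indep: "lin_indep_family_over E I v" and E: "subfield E" and i: "i \<in> I"
  shows "v i \<noteq> 0"
proof
  assume "v i = 0"
  define c where "c = (\<lambda>j. of_bool (j = i) :: 'a)"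
  have "(\<Sum>j\<in>I. c j * v j) = 0"
    using lin_indep_family_over_finite[OF indep] i \<open>v i = 0\<close> by (simp add: c_def Int_def)
  then have "c i = 0"
    by (rule lin_indep_family_overD[OF indep, rotated]) (use i E in \<open>auto simp: c_def subfield_0 subfield_1\<close>)
  then show False by (simp add: c_def)
qed

lemma inj_on_lin_indep_family_over:
  assumes indep: "lin_indep_family_over E I v" and E: "subfield E"
  shows "inj_on v I"
proof (rule inj_onI, rule ccontr)
  fix i j assume ij: "i \<in> I" "j \<in> I" "v i = v j" "i \<noteq> j"
  define c where "c = (\<lambda>k. if k = i then 1 else if k = j then -1 else (0::'a))"
  have "(\<Sum>k\<in>I. c k * v k) = (\<Sum>k\<in>{i, j}. c k * v k)"
    by (rule sum.mono_neutral_right) (use lin_indep_family_over_finite[OF indep] ij in \<open>auto simp: c_def\<close>)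
  also have "\<dots> = 0" using ij by (simp add: c_def)
  finally have "c i = 0"
    by (rule lin_indep_family_overD[OF indep, rotated])
      (use ij E in \<open>auto simp: c_def subfield_0 subfield_1 subfield_uminus\<close>)
  then show False by (simp add: c_def)
qed

lemma lin_indep_family_over_iff_image:
  assumes inj: "inj_on v I"
  shows "lin_indep_family_over E I v \<longleftrightarrow> lin_indep_over E (v ` I)"
proof
  assume indep: "lin_indep_family_over E I v"
  show "lin_indep_over E (v ` I)" unfolding lin_indep_over_def
  proof (intro conjI allI impI ballI)
    show "finite (v ` I)" using lin_indep_family_over_finite[OF indep] by simp
    fix c x assume c: "\<forall>b\<in>v ` I. c b \<in> E" and "(\<Sum>b\<in>v ` I. c b * b) = 0" and x: "x \<in> v ` I"
    then have "(\<Sum>i\<in>I. c (v i) * v i) = 0" by (simp add: sum.reindex[OF inj])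
    then have "\<forall>i\<in>I. c (v i) = 0" using indep c unfolding lin_indep_family_over_def by auto
    then show "c x = 0" using x by auto
  qed
next
  assume indep: "lin_indep_over E (v ` I)"
  show "lin_indep_family_over E I v" unfolding lin_indep_family_over_def
  proof (intro conjI allI impI ballI)
    show "finite I" using lin_indep_over_finite[OF indep] finite_image_iff[OF inj] by simp
    fix c i assume c: "\<forall>i\<in>I. c i \<in> E" and sum0: "(\<Sum>i\<in>I. c i * v i) = 0" and i: "i \<in> I"
    define c' where "c' = (\<lambda>x. c (inv_into I v x))"
    have c'v: "c' (v i) = c i" if "i \<in> I" for i using inj that by (simp add: c'_def)
    have "(\<Sum>b\<in>v ` I. c' b * b) = 0" using sum0 c'v by (simp add: sum.reindex[OF inj])
    then have "c' (v i) = 0" by (rule lin_indep_overD[OF indep, rotated]) (use c c'v i in auto)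
    then show "c i = 0" using c'v i by simp
  qed
qed

lemma span_overI: "(\<And>b. b \<in> S \<Longrightarrow> c b \<in> E) \<Longrightarrow> x = (\<Sum>b\<in>S. c b * b) \<Longrightarrow> x \<in> span_over E S"
  unfolding span_over_def by blast

lemma span_overE:
  assumes "x \<in> span_over E S"
  obtains c where "\<And>b. b \<in> S \<Longrightarrow> c b \<in> E" "x = (\<Sum>b\<in>S. c b * b)"
  using assms unfolding span_over_def by blast

lemma span_over_empty: "span_over E {} = {0}"
  unfolding span_over_def by auto

lemma span_over_0: "subfield E \<Longrightarrow> 0 \<in> span_over E S"
  by (rule span_overI[of S "\<lambda>_. 0"]) (auto simp: subfield_0)

lemma span_over_add:
  assumes E: "subfield E" and "x \<in> span_over E S" "y \<in> span_over E S"
  shows "x + y \<in> span_over E S"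
proof -
  obtain c where c: "\<And>b. b \<in> S \<Longrightarrow> c b \<in> E" "x = (\<Sum>b\<in>S. c b * b)"
    using assms(2) by (blast elim: span_overE)
  obtain d where d: "\<And>b. b \<in> S \<Longrightarrow> d b \<in> E" "y = (\<Sum>b\<in>S. d b * b)"
    using assms(3) by (blast elim: span_overE)
  show ?thesis
    by (rule span_overI[of S "\<lambda>b. c b + d b"]) (auto simp: c d subfield_add[OF E] sum.distrib distrib_right)
qed

lemma span_over_smult:
  assumes E: "subfield E" and "e \<in> E" "x \<in> span_over E S"
  shows "e * x \<in> span_over E S"
proof -
  obtain c where c: "\<And>b. b \<in> S \<Longrightarrow> c b \<in> E" "x = (\<Sum>b\<in>S. c b * b)"
    using assms(3) by (blast elim: span_overE)
  show ?thesis
    by (rule span_overI[of S "\<lambda>b. e * c b"]) (auto simp: c subfield_mult[OF E] assms(2) sum_distrib_left mult.assoc)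
qed

lemma span_over_diff:
  assumes E: "subfield E" and "x \<in> span_over E S" "y \<in> span_over E S"
  shows "x - y \<in> span_over E S"
  using span_over_add[OF E assms(2) span_over_smult[OF E subfield_uminus[OF E subfield_1[OF E]] assms(3)]]
  by simp

lemma span_over_sum:
  "subfield E \<Longrightarrow> (\<And>i. i \<in> I \<Longrightarrow> f i \<in> span_over E S) \<Longrightarrow> sum f I \<in> span_over E S"
  by (rule sum_closed) (auto simp: span_over_0 span_over_add)

lemma span_over_superset:
  assumes E: "subfield E" and "finite S"
  shows "S \<subseteq> span_over E S"
proof
  fix b assume b: "b \<in> S"
  show "b \<in> span_over E S"
  proof (rule span_overI[of S "\<lambda>x. of_bool (x = b)"])
    show "\<And>x. x \<in> S \<Longrightarrow> of_bool (x = b) \<in> E" using E by (auto simp: subfield_0 subfield_1)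
    show "b = (\<Sum>x\<in>S. of_bool (x = b) * x)" using assms(2) b by simp
  qed
qed

lemma span_over_mono_field: "E \<subseteq> E' \<Longrightarrow> span_over E S \<subseteq> span_over E' S"
  unfolding span_over_def by blast

lemma span_over_subset_subfield:
  assumes N: "subfield N" and "E \<subseteq> N" "S \<subseteq> N"
  shows "span_over E S \<subseteq> N"
proof
  fix x assume "x \<in> span_over E S"
  then obtain c where c: "\<And>b. b \<in> S \<Longrightarrow> c b \<in> E" "x = (\<Sum>b\<in>S. c b * b)"
    by (blast elim: span_overE)
  show "x \<in> N" unfolding c(2) using c(1) assms by (intro subfield_sum[OF N] subfield_mult[OF N]) auto
qed

lemma span_over_insertE:
  assumes "finite S" "t \<notin> S" "x \<in> span_over E (insert t S)"
  obtains a r where "a \<in> E" "r \<in> span_over E S" "x = a * t + r"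
proof -
  obtain c where c: "\<And>b. b \<in> insert t S \<Longrightarrow> c b \<in> E" "x = (\<Sum>b\<in>insert t S. c b * b)"
    using assms(3) by (blast elim: span_overE)
  have "x = c t * t + (\<Sum>b\<in>S. c b * b)" using c(2) assms(1,2) by simp
  moreover have "(\<Sum>b\<in>S. c b * b) \<in> span_over E S" by (rule span_overI[of S c]) (use c in auto)
  ultimately show ?thesis using that c(1) by blast
qed

lemma span_over_image:
  assumes "inj_on v I" "\<And>i. i \<in> I \<Longrightarrow> c i \<in> E"
  shows "(\<Sum>i\<in>I. c i * v i) \<in> span_over E (v ` I)"
proof (rule span_overI[of _ "\<lambda>x. c (inv_into I v x)"])
  show "\<And>b. b \<in> v ` I \<Longrightarrow> c (inv_into I v b) \<in> E" using assms by (auto simp: inv_into_f_f)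
  show "(\<Sum>i\<in>I. c i * v i) = (\<Sum>b\<in>v ` I. c (inv_into I v b) * b)"
    by (simp add: sum.reindex[OF assms(1)] inv_into_f_f[OF assms(1)])
qed

lemma lin_indep_family_over_eliminate:
  assumes E: "subfield E" and indep: "lin_indep_family_over E I v"
    and a: "\<And>i. i \<in> I \<Longrightarrow> a i \<in> E" and i0: "i0 \<in> I" "a i0 \<noteq> 0"
  shows "lin_indep_family_over E (I - {i0}) (\<lambda>i. v i - (a i / a i0) * v i0)"
  unfolding lin_indep_family_over_def
proof (intro conjI allI impI ballI)
  have finI: "finite I" using indep by (rule lin_indep_family_over_finite)
  then show "finite (I - {i0})" by simp
  fix c i assume c: "\<forall>i\<in>I - {i0}. c i \<in> E" and i: "i \<in> I - {i0}"
    and sum0: "(\<Sum>i\<in>I - {i0}. c i * (v i - (a i / a i0) * v i0)) = 0"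
  define c' where "c' = (\<lambda>j. if j = i0 then - (\<Sum>k\<in>I - {i0}. c k * (a k / a i0)) else c j)"
  have "(\<Sum>j\<in>I. c' j * v j) = c' i0 * v i0 + (\<Sum>j\<in>I - {i0}. c j * v j)"
    using finI i0(1) by (simp add: sum.remove c'_def)
  also have "\<dots> = (\<Sum>i\<in>I - {i0}. c i * (v i - (a i / a i0) * v i0))"
    by (simp add: c'_def right_diff_distrib sum_subtractf sum_distrib_right mult.assoc)
  finally have "(\<Sum>j\<in>I. c' j * v j) = 0" using sum0 by simp
  then have "c' i = 0"
    by (rule lin_indep_family_overD[OF indep, rotated])
      (use i c a i0 in \<open>auto simp: c'_def intro!: subfield_uminus[OF E] subfield_sum[OF E]
        subfield_mult[OF E] subfield_divide[OF E]\<close>)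
  then show "c i = 0" using i by (simp add: c'_def)
qed

lemma lin_indep_family_over_card_le_span:
  assumes "finite T" and E: "subfield E"
  shows "lin_indep_family_over E I v \<Longrightarrow> (\<And>i. i \<in> I \<Longrightarrow> v i \<in> span_over E T) \<Longrightarrow> card I \<le> card T"
  using assms(1)
proof (induction T arbitrary: I v rule: finite_induct)
  case empty
  then have "I = {}" using lin_indep_family_over_nonzero[OF empty.prems(1) E] span_over_empty by auto
  then show ?case by simp
next
  case (insert t T)
  have "\<forall>i\<in>I. \<exists>a r. a \<in> E \<and> r \<in> span_over E T \<and> v i = a * t + r"
    using span_over_insertE[OF insert.hyps(1,2) insert.prems(2)] by metis
  then obtain a r where a: "\<And>i. i \<in> I \<Longrightarrow> a i \<in> E" and r: "\<And>i. i \<in> I \<Longrightarrow> r i \<in> span_over E T"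
    and v: "\<And>i. i \<in> I \<Longrightarrow> v i = a i * t + r i"
    by metis
  show ?case
  proof (cases "\<forall>i\<in>I. a i = 0")
    case True
    then have "card I \<le> card T" using insert.IH[OF insert.prems(1)] v r by auto
    then show ?thesis using insert.hyps by simp
  next
    case False
    then obtain i0 where i0: "i0 \<in> I" "a i0 \<noteq> 0" by auto
    \<comment> \<open>subtracting multiples of \<open>v i0\<close> eliminates \<open>t\<close> from the remaining vectors\<close>
    have indep: "lin_indep_family_over E (I - {i0}) (\<lambda>i. v i - (a i / a i0) * v i0)"
      by (rule lin_indep_family_over_eliminate[where a = a, OF E insert.prems(1) a i0])
    have span: "v i - (a i / a i0) * v i0 \<in> span_over E T" if "i \<in> I - {i0}" for i
    proof -
      have "v i - (a i / a i0) * v i0 = r i - (a i / a i0) * r i0"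
        using v[of i] v[OF i0(1)] i0(2) that by (simp add: field_simps)
      also have "\<dots> \<in> span_over E T"
        using that i0 a r by (intro span_over_diff[OF E] span_over_smult[OF E] subfield_divide[OF E]) auto
      finally show ?thesis .
    qed
    have "card (I - {i0}) \<le> card T" using insert.IH[OF indep span] by simp
    moreover have "finite I" using insert.prems(1) by (rule lin_indep_family_over_finite)
    ultimately show ?thesis using i0(1) insert.hyps by (simp add: card_Diff_singleton)
  qed
qed

lemma is_basis_over_finite: "is_basis_over E V B \<Longrightarrow> finite B"
  by (simp add: is_basis_over_def)

lemma is_basis_over_subset: "is_basis_over E V B \<Longrightarrow> B \<subseteq> V"
  by (simp add: is_basis_over_def)

lemma is_basis_over_indep: "is_basis_over E V B \<Longrightarrow> lin_indep_over E B"
  by (simp add: is_basis_over_def)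

lemma is_basis_over_span: "is_basis_over E V B \<Longrightarrow> span_over E B = V"
  by (simp add: is_basis_over_def)

lemma lin_indep_over_card_le_basis:
  assumes "subfield E" "is_basis_over E V B" "S \<subseteq> V" "lin_indep_over E S"
  shows "card S \<le> card B"
  using lin_indep_family_over_card_le_span[OF is_basis_over_finite[OF assms(2)] assms(1), of S id] assms
  unfolding lin_indep_over_iff_family by (auto simp: is_basis_over_span)

lemma is_basis_over_card_eq:
  assumes "subfield E" "is_basis_over E V B1" "is_basis_over E V B2"
  shows "card B1 = card B2"
  using assms lin_indep_over_card_le_basis is_basis_over_subset is_basis_over_indep
  by (metis le_antisym)

lemma ext_degree_eq_card:
  assumes "subfield E" "is_basis_over E V B"
  shows "ext_degree E V = card B"
  unfolding ext_degree_def
  using someI[of "is_basis_over E V", OF assms(2)] is_basis_over_card_eq[OF assms(1)] assms(2) by blast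

lemma ext_degree_self:
  assumes K: "subfield K"
  shows "ext_degree K K = 1"
proof -
  have "span_over K {1} = K"
    unfolding span_over_def by (force intro: exI[of _ "\<lambda>_. _"])
  then have "is_basis_over K K {1}"
    using subfield_1[OF K] by (simp add: is_basis_over_def lin_indep_over_def)
  then show ?thesis using ext_degree_eq_card[OF K] by simp
qed

lemma ext_degree_mono:
  assumes "finite_ext K L" "finite_ext K M" "L \<subseteq> M"
  shows "ext_degree K L \<le> ext_degree K M"
proof -
  obtain BL BM where BL: "is_basis_over K L BL" and BM: "is_basis_over K M BM"
    using assms(1,2) by (auto simp: finite_ext_def)
  have K: "subfield K" using assms(1) by (simp add: finite_ext_def)
  have "card BL \<le> card BM"
    using is_basis_over_subset[OF BL] assms(3) is_basis_over_indep[OF BL]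
    by (intro lin_indep_over_card_le_basis[OF K BM]) auto
  then show ?thesis using ext_degree_eq_card[OF K BL] ext_degree_eq_card[OF K BM] by simp
qed

lemma lin_indep_over_insert:
  assumes E: "subfield E" and S: "lin_indep_over E S" and w: "w \<notin> span_over E S"
  shows "lin_indep_over E (insert w S)"
  unfolding lin_indep_over_def
proof (intro conjI allI impI ballI)
  have fin: "finite S" using S by (rule lin_indep_over_finite)
  then show "finite (insert w S)" by simp
  have wS: "w \<notin> S" using w span_over_superset[OF E fin] by auto
  fix c x assume c: "\<forall>b\<in>insert w S. c b \<in> E" and "(\<Sum>b\<in>insert w S. c b * b) = 0"
    and x: "x \<in> insert w S"
  then have sum0: "c w * w + (\<Sum>b\<in>S. c b * b) = 0" using fin wS by simp
  have cw: "c w = 0"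
  proof (rule ccontr)
    assume "c w \<noteq> 0"
    then have "w = (\<Sum>b\<in>S. (- c b / c w) * b)"
      using sum0 by (simp add: field_simps sum_divide_distrib[symmetric] sum_negf eq_neg_iff_add_eq_0)
    moreover have "(\<Sum>b\<in>S. (- c b / c w) * b) \<in> span_over E S"
      by (rule span_overI[OF _ refl]) (use c E in \<open>auto intro!: subfield_divide subfield_uminus\<close>)
    ultimately show False using w by simp
  qed
  then have "\<forall>b\<in>S. c b = 0" using S c sum0 unfolding lin_indep_over_def by auto
  then show "c x = 0" using x cw by auto
qed

lemma subspace_has_basis:
  assumes E: "subfield E" and B: "is_basis_over E V B" and WV: "W \<subseteq> V" and W0: "0 \<in> W"
    and Wadd: "\<And>x y. x \<in> W \<Longrightarrow> y \<in> W \<Longrightarrow> x + y \<in> W"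
    and Wsmult: "\<And>e x. e \<in> E \<Longrightarrow> x \<in> W \<Longrightarrow> e * x \<in> W"
  obtains S where "is_basis_over E W S"
proof -
  define P where "P = (\<lambda>S. S \<subseteq> W \<and> lin_indep_over E S)"
  have "P {}" by (simp add: P_def lin_indep_over_def)
  moreover have "\<forall>S. P S \<longrightarrow> card S < Suc (card B)"
    using lin_indep_over_card_le_basis[OF E B] WV by (auto simp: P_def less_Suc_eq_le)
  \<comment> \<open>an independent subset of \<open>W\<close> of maximal size spans \<open>W\<close>\<close>
  ultimately obtain S where S: "P S" and Smax: "\<And>S'. P S' \<Longrightarrow> card S' \<le> card S"
    using ex_has_greatest_nat[of P "{}" card "Suc (card B)"] by blast
  have SW: "S \<subseteq> W" and Si: "lin_indep_over E S" using S by (auto simp: P_def)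
  have fin: "finite S" using Si by (rule lin_indep_over_finite)
  have "span_over E S \<subseteq> W"
  proof
    fix x assume "x \<in> span_over E S"
    then obtain c where c: "\<And>b. b \<in> S \<Longrightarrow> c b \<in> E" "x = (\<Sum>b\<in>S. c b * b)"
      by (blast elim: span_overE)
    show "x \<in> W" unfolding c(2) by (rule sum_closed[OF W0 Wadd]) (use c SW Wsmult in auto)
  qed
  moreover have "W \<subseteq> span_over E S"
  proof
    fix w assume w: "w \<in> W"
    show "w \<in> span_over E S"
    proof (rule ccontr)
      assume nw: "w \<notin> span_over E S"
      then have "P (insert w S)" using lin_indep_over_insert[OF E Si nw] w SW by (auto simp: P_def)
      moreover have "w \<notin> S" using nw span_over_superset[OF E fin] by auto
      ultimately show False using Smax[of "insert w S"] fin by simp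
    qed
  qed
  ultimately show ?thesis using that fin SW Si by (auto simp: is_basis_over_def)
qed

lemma finite_ext_intermediate:
  assumes N: "finite_ext K N" and L: "subfield L" and KL: "K \<subseteq> L" and LN: "L \<subseteq> N"
  shows "finite_ext K L"
proof -
  have K: "subfield K" using N by (simp add: finite_ext_def)
  obtain B where B: "is_basis_over K N B" using N by (auto simp: finite_ext_def)
  have "e * x \<in> L" if "e \<in> K" "x \<in> L" for e x
    using subfield_mult[OF L, of e x] that KL by auto
  then obtain S where "is_basis_over K L S"
    using subspace_has_basis[OF K B LN subfield_0[OF L] subfield_add[OF L]] by blast
  then show ?thesis using L K KL by (auto simp: finite_ext_def)
qed

lemma lin_indep_family_over_products:
  assumes K: "subfield K" and F: "subfield F" and KF: "K \<subseteq> F" and A: "lin_indep_over F A"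
    and BF: "B \<subseteq> F" and B: "lin_indep_over K B"
  shows "lin_indep_family_over K (A \<times> B) (\<lambda>(a, b). a * b)"
  unfolding lin_indep_family_over_def
proof (intro conjI allI impI ballI)
  show "finite (A \<times> B)" using A B by (simp add: lin_indep_over_finite)
  fix c p assume c: "\<forall>p\<in>A \<times> B. c p \<in> K" and sum0: "(\<Sum>p\<in>A \<times> B. c p * (case p of (a, b) \<Rightarrow> a * b)) = 0"
    and p: "p \<in> A \<times> B"
  have "(\<Sum>a\<in>A. (\<Sum>b\<in>B. c (a, b) * b) * a) = (\<Sum>a\<in>A. \<Sum>b\<in>B. c (a, b) * (a * b))"
    by (simp add: sum_distrib_left sum_distrib_right ac_simps)
  also have "\<dots> = 0" using sum0 by (simp add: sum.cartesian_product case_prod_beta)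
  finally have "(\<Sum>a\<in>A. (\<Sum>b\<in>B. c (a, b) * b) * a) = 0" .
  moreover have "(\<Sum>b\<in>B. c (a, b) * b) \<in> F" if "a \<in> A" for a
    using c BF KF that by (auto intro!: subfield_sum[OF F] subfield_mult[OF F])
  ultimately have inner: "(\<Sum>b\<in>B. c (a, b) * b) = 0" if "a \<in> A" for a
    using lin_indep_overD[OF A, of "\<lambda>a. \<Sum>b\<in>B. c (a, b) * b" a] that by blast
  obtain a b where ab: "p = (a, b)" "a \<in> A" "b \<in> B" using p by auto
  have "c (a, b) = 0" by (rule lin_indep_overD[OF B _ inner[OF ab(2)] ab(3)]) (use c ab in auto)
  then show "c p = 0" using ab by simp
qed

lemma is_basis_over_tower:
  assumes K: "subfield K" and E: "subfield E" and X: "subfield X" and KE: "K \<subseteq> E" and EX: "E \<subseteq> X"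
    and B: "is_basis_over E X B" and C: "is_basis_over K E C"
  shows "is_basis_over K X ((\<lambda>(b, c). b * c) ` (B \<times> C))"
proof -
  let ?v = "\<lambda>(b, c). b * c"
  have indep: "lin_indep_family_over K (B \<times> C) ?v"
    by (rule lin_indep_family_over_products[OF K E KE is_basis_over_indep[OF B]
          is_basis_over_subset[OF C] is_basis_over_indep[OF C]])
  have inj: "inj_on ?v (B \<times> C)" by (rule inj_on_lin_indep_family_over[OF indep K])
  have sub: "?v ` (B \<times> C) \<subseteq> X"
    using is_basis_over_subset[OF B] is_basis_over_subset[OF C] EX by (auto intro!: subfield_mult[OF X])
  have "X \<subseteq> span_over K (?v ` (B \<times> C))"
  proof
    fix x assume "x \<in> X"
    then have "x \<in> span_over E B" by (simp add: is_basis_over_span[OF B])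
    then obtain c where c: "\<And>b. b \<in> B \<Longrightarrow> c b \<in> E" "x = (\<Sum>b\<in>B. c b * b)"
      by (blast elim: span_overE)
    have "\<forall>b\<in>B. c b \<in> span_over K C" using c(1) by (simp add: is_basis_over_span[OF C])
    then have "\<forall>b\<in>B. \<exists>d. (\<forall>e\<in>C. d e \<in> K) \<and> c b = (\<Sum>e\<in>C. d e * e)"
      unfolding span_over_def by blast
    then obtain d where d: "\<And>b e. b \<in> B \<Longrightarrow> e \<in> C \<Longrightarrow> d b e \<in> K"
      and cd: "\<And>b. b \<in> B \<Longrightarrow> c b = (\<Sum>e\<in>C. d b e * e)"
      by metis
    have "x = (\<Sum>b\<in>B. \<Sum>e\<in>C. d b e * (b * e))"
      unfolding c(2) using cd by (simp add: sum_distrib_right sum_distrib_left ac_simps)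
    also have "\<dots> = (\<Sum>p\<in>B \<times> C. d (fst p) (snd p) * ?v p)"
      by (simp add: sum.cartesian_product case_prod_beta)
    also have "\<dots> \<in> span_over K (?v ` (B \<times> C))"
      by (rule span_over_image[OF inj]) (use d in auto)
    finally show "x \<in> span_over K (?v ` (B \<times> C))" .
  qed
  moreover have "span_over K (?v ` (B \<times> C)) \<subseteq> X"
    by (rule span_over_subset_subfield[OF X]) (use KE EX sub in auto)
  ultimately show ?thesis
    using indep lin_indep_family_over_iff_image[OF inj] sub is_basis_over_finite[OF B] is_basis_over_finite[OF C]
    by (auto simp: is_basis_over_def)
qed

section \<open>Composita with algebraic extensions\<close>

lemma poly_mem_closed:
  assumes R0: "0 \<in> R" and Radd: "\<And>x y. x \<in> R \<Longrightarrow> y \<in> R \<Longrightarrow> x + y \<in> R"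
    and Rmult: "\<And>x y. x \<in> R \<Longrightarrow> y \<in> R \<Longrightarrow> x * y \<in> R" and KR: "K \<subseteq> R" and x: "x \<in> R"
  shows "(\<forall>i. coeff q i \<in> K) \<Longrightarrow> poly q x \<in> R"
proof (induction q rule: pCons_induct)
  case (pCons a p)
  then have "a \<in> K" "\<forall>i. coeff p i \<in> K" using pCons.prems[rule_format, of 0] pCons.prems[rule_format, of "Suc _"]
    by simp_all
  then show ?case using pCons.IH KR x by (auto intro: Radd Rmult)
qed (simp add: R0)

lemma inverse_mem_if_algebraic:
  assumes K: "subfield K" and R0: "0 \<in> R" and Radd: "\<And>x y. x \<in> R \<Longrightarrow> y \<in> R \<Longrightarrow> x + y \<in> R"
    and Rmult: "\<And>x y. x \<in> R \<Longrightarrow> y \<in> R \<Longrightarrow> x * y \<in> R"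
    and KR: "K \<subseteq> R" and x: "x \<in> R" and alg: "algebraic_over K x"
  shows "inverse x \<in> R"
proof (cases "x = 0")
  case True
  then show ?thesis using R0 by simp
next
  case False
  have "p \<noteq> 0 \<Longrightarrow> (\<forall>i. coeff p i \<in> K) \<Longrightarrow> poly p x = 0 \<Longrightarrow> inverse x \<in> R" for p
  proof (induction p rule: pCons_induct)
    case (pCons a q)
    have aK: "a \<in> K" and qK: "\<forall>i. coeff q i \<in> K"
      using pCons.prems(2)[rule_format, of 0] pCons.prems(2)[rule_format, of "Suc _"] by simp_all
    have root: "a + x * poly q x = 0" using pCons.prems(3) by simp
    show ?case
    proof (cases "a = 0")
      case True
      then show ?thesis using pCons.IH qK pCons.prems(1) root \<open>x \<noteq> 0\<close> by auto
    next
      case False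
      have "inverse x = poly q x * (- inverse a)"
        using root False \<open>x \<noteq> 0\<close> by (simp add: field_simps eq_neg_iff_add_eq_0 add.commute)
      moreover have "poly q x \<in> R" by (rule poly_mem_closed[OF R0 Radd Rmult KR x qK])
      moreover have "- inverse a \<in> R" using KR aK subfield_uminus[OF K subfield_inverse[OF K aK]] by auto
      ultimately show ?thesis using Rmult[of "poly q x" "- inverse a"] by simp
    qed
  qed simp
  then show ?thesis using alg unfolding algebraic_over_def by blast
qed

lemma compositum_eq_span_over:
  assumes K: "subfield K" and E: "subfield E" and KE: "K \<subseteq> E" and A: "subfield A"
    and B: "is_basis_over K A B" and alg: "\<forall>x. algebraic_over K x"
  shows "compositum A E = span_over E B"
proof -
  let ?R = "span_over E B"
  have BA: "B \<subseteq> A" using B by (rule is_basis_over_subset)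
  have AR: "A \<subseteq> ?R" using span_over_mono_field[OF KE, of B] is_basis_over_span[OF B] by simp
  have R0: "0 \<in> ?R" and Radd: "\<And>x y. x \<in> ?R \<Longrightarrow> y \<in> ?R \<Longrightarrow> x + y \<in> ?R"
    and Rsmult: "\<And>e x. e \<in> E \<Longrightarrow> x \<in> ?R \<Longrightarrow> e * x \<in> ?R"
    by (simp_all add: span_over_0[OF E] span_over_add[OF E] span_over_smult[OF E])
  have ER: "E \<subseteq> ?R" using Rsmult[OF _ subsetD[OF AR subfield_1[OF A]]] by auto
  have bR: "b * y \<in> ?R" if b: "b \<in> B" and y: "y \<in> ?R" for b y
  proof -
    obtain d where d: "\<And>b. b \<in> B \<Longrightarrow> d b \<in> E" "y = (\<Sum>b\<in>B. d b * b)"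
      using y by (blast elim: span_overE)
    have "b * y = (\<Sum>b'\<in>B. d b' * (b * b'))" by (simp add: d(2) sum_distrib_left mult.left_commute)
    also have "\<dots> \<in> ?R"
    proof (rule span_over_sum[OF E], rule Rsmult)
      fix b' assume "b' \<in> B"
      then show "d b' \<in> E" "b * b' \<in> ?R" using d(1) subfield_mult[OF A, of b b'] BA b AR by auto
    qed
    finally show ?thesis .
  qed
  have Rmult: "x * y \<in> ?R" if x: "x \<in> ?R" and y: "y \<in> ?R" for x y
  proof -
    obtain c where c: "\<And>b. b \<in> B \<Longrightarrow> c b \<in> E" "x = (\<Sum>b\<in>B. c b * b)"
      using x by (blast elim: span_overE)
    have "x * y = (\<Sum>b\<in>B. c b * (b * y))" by (simp add: c(2) sum_distrib_right mult.assoc)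
    also have "\<dots> \<in> ?R" by (rule span_over_sum[OF E], rule Rsmult) (use c(1) bR y in auto)
    finally show ?thesis .
  qed
  \<comment> \<open>the \<open>E\<close>-span of \<open>B\<close> is a ring, algebraic over \<open>K\<close>, hence a field\<close>
  have "subfield ?R"
    unfolding subfield_def
    using R0 Radd Rmult subsetD[OF AR subfield_1[OF A]] span_over_diff[OF E R0]
      inverse_mem_if_algebraic[OF K R0 Radd Rmult _ _ alg[rule_format]] KE ER
    by auto
  moreover have "?R \<subseteq> N" if "subfield N" "A \<subseteq> N" "E \<subseteq> N" for N
    using span_over_subset_subfield[OF that(1) that(3)] BA that(2) by blast
  ultimately show ?thesis
    using AR ER compositum_least[of ?R A E] subset_compositum1[of A E] subset_compositum2[of E A] subfield_compositum[of A E]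
    by (meson subset_antisym)
qed

lemma is_basis_over_compositum:
  assumes K: "subfield K" and E: "subfield E" and KE: "K \<subseteq> E" and A: "subfield A"
    and B: "is_basis_over K A B" and alg: "\<forall>x. algebraic_over K x" and BE: "lin_indep_over E B"
  shows "is_basis_over E (compositum A E) B"
  using compositum_eq_span_over[OF assms(1-6)] BE is_basis_over_finite[OF B] is_basis_over_subset[OF B]
    subset_compositum1[of A E]
  by (auto simp: is_basis_over_def)

lemma finite_ext_compositum:
  assumes "subfield E" "is_basis_over E (compositum A E) B"
  shows "finite_ext E (compositum A E)"
  using assms subfield_compositum subset_compositum2 unfolding finite_ext_def by blast

lemma finite_ext_compositum_over_base:
  assumes K': "finite_ext K K'" and A: "finite_ext K' (compositum A K')"
  shows "finite_ext K (compositum A K')"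
proof -
  have K: "subfield K" and K'F: "subfield K'" and KK': "K \<subseteq> K'" using K' by (auto simp: finite_ext_def)
  obtain C where C: "is_basis_over K K' C" using K' by (auto simp: finite_ext_def)
  obtain B where "is_basis_over K' (compositum A K') B" using A by (auto simp: finite_ext_def)
  then have "is_basis_over K (compositum A K') ((\<lambda>(b, c). b * c) ` (B \<times> C))"
    by (rule is_basis_over_tower[OF K K'F subfield_compositum KK' subset_compositum2 _ C])
  then show ?thesis
    using K subfield_compositum KK' subset_compositum2[of K' A] unfolding finite_ext_def by blast
qed

section \<open>Linear disjointness\<close>

lemma lin_disjoint_subset: "lin_disjoint E A B \<Longrightarrow> A' \<subseteq> A \<Longrightarrow> lin_disjoint E A' B"
  unfolding lin_disjoint_def by auto

lemma lin_disjoint_Int_subset: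
  assumes disj: "lin_disjoint E A B" and E: "subfield E" and B: "subfield B" and A1: "1 \<in> A"
  shows "A \<inter> B \<subseteq> E"
proof
  fix f assume f: "f \<in> A \<inter> B"
  show "f \<in> E"
  proof (rule ccontr)
    assume fE: "f \<notin> E"
    have indep: "lin_indep_over B {1, f}"
      using disj[unfolded lin_disjoint_def, rule_format, of "{1, f}"] lin_indep_over_pair[OF E fE] f A1
      by simp
    have "f \<noteq> 1" using fE subfield_1[OF E] by auto
    define c where "c = (\<lambda>x::'a. if x = 1 then f else - 1)"
    have c_mem: "c b \<in> B" if "b \<in> {1, f}" for b
      using f subfield_uminus[OF B subfield_1[OF B]] by (simp add: c_def)
    have "(\<Sum>b\<in>{1, f}. c b * b) = 0" using \<open>f \<noteq> 1\<close> by (simp add: c_def)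
    then have "c 1 = 0" using lin_indep_overD[OF indep, of c 1, OF c_mem] by simp
    then show False using fE subfield_0[OF E] by (simp add: c_def)
  qed
qed

lemma compositum_neq_if_lin_disjoint:
  assumes disj: "lin_disjoint K N K'" and K: "subfield K" and K': "subfield K'" and N1: "1 \<in> N"
    and FN: "F \<subseteq> N" and KF: "K \<subseteq> F" "F \<noteq> K"
  shows "compositum F K' \<noteq> K'"
proof
  assume "compositum F K' = K'"
  then have "F \<subseteq> N \<inter> K'" using subset_compositum1[of F K'] FN by auto
  also have "\<dots> \<subseteq> K" by (rule lin_disjoint_Int_subset[OF disj K K' N1])
  finally show False using KF by blast
qed

lemma lin_disjoint_basis_indep:
  assumes "lin_disjoint K N K'" "is_basis_over K A B" "A \<subseteq> N"
  shows "lin_indep_over K' B"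
proof -
  have "B \<subseteq> N" using is_basis_over_subset[OF assms(2)] assms(3) by (rule order_trans)
  then show ?thesis using assms(1) is_basis_over_indep[OF assms(2)] unfolding lin_disjoint_def by blast
qed

lemma finite_ext_base_change:
  assumes K: "subfield K" and K': "subfield K'" and KK': "K \<subseteq> K'" and alg: "\<forall>x. algebraic_over K x"
    and A: "finite_ext K A" and NK': "lin_disjoint K N K'" and AN: "A \<subseteq> N"
  shows "finite_ext K' (compositum A K')" "ext_degree K' (compositum A K') = ext_degree K A"
proof -
  obtain B where B: "is_basis_over K A B" using A by (auto simp: finite_ext_def)
  have "subfield A" using A by (simp add: finite_ext_def)
  then have AK': "is_basis_over K' (compositum A K') B"
    using is_basis_over_compositum[OF K K' KK' _ B alg lin_disjoint_basis_indep[OF NK' B AN]] by blast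
  then show "finite_ext K' (compositum A K')" by (rule finite_ext_compositum[OF K'])
  show "ext_degree K' (compositum A K') = ext_degree K A"
    using ext_degree_eq_card[OF K' AK'] ext_degree_eq_card[OF K B] by simp
qed

lemma lin_indep_over_basis_swap:
  assumes K: "subfield K" and K': "subfield K'" and KK': "K \<subseteq> K'"
    and B: "is_basis_over K F B" and BK': "lin_indep_over K' B" and C: "is_basis_over K K' C"
  shows "lin_indep_over F C"
  unfolding lin_indep_over_def
proof (intro conjI allI impI ballI)
  show "finite C" by (rule is_basis_over_finite[OF C])
  fix g e assume g: "\<forall>e\<in>C. g e \<in> F" and sum0: "(\<Sum>e\<in>C. g e * e) = 0" and e: "e \<in> C"
  have "\<forall>e\<in>C. g e \<in> span_over K B" using g by (simp add: is_basis_over_span[OF B])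
  then have "\<forall>e\<in>C. \<exists>h. (\<forall>b\<in>B. h b \<in> K) \<and> g e = (\<Sum>b\<in>B. h b * b)"
    unfolding span_over_def by blast
  then obtain h where h: "\<And>e b. e \<in> C \<Longrightarrow> b \<in> B \<Longrightarrow> h e b \<in> K"
    and gh: "\<And>e. e \<in> C \<Longrightarrow> g e = (\<Sum>b\<in>B. h e b * b)"
    by metis
  have "(\<Sum>b\<in>B. (\<Sum>e\<in>C. h e b * e) * b) = (\<Sum>e\<in>C. g e * e)"
    using gh by (simp add: sum.swap[of _ B] sum_distrib_right sum_distrib_left ac_simps)
  then have "(\<Sum>b\<in>B. (\<Sum>e\<in>C. h e b * e) * b) = 0" using sum0 by simp
  moreover have "(\<Sum>e\<in>C. h e b * e) \<in> K'" if "b \<in> B" for b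
    using h that is_basis_over_subset[OF C] KK' by (intro subfield_sum[OF K'] subfield_mult[OF K']) auto
  ultimately have inner: "(\<Sum>e\<in>C. h e b * e) = 0" if "b \<in> B" for b
    using lin_indep_overD[OF BK', of "\<lambda>b. \<Sum>e\<in>C. h e b * e" b] that by blast
  have "h e b = 0" if "b \<in> B" for b
    using lin_indep_overD[OF is_basis_over_indep[OF C], of "\<lambda>e. h e b" e] inner[OF that] h e that by blast
  then show "g e = 0" using gh[OF e] by simp
qed

lemma lin_indep_family_over_products_coeffs:
  assumes E: "subfield E" and prod: "lin_indep_family_over E (A \<times> B) (\<lambda>(a, b). a * b)"
    and l: "\<And>s b. s \<in> S \<Longrightarrow> b \<in> B \<Longrightarrow> l s b \<in> E" and m: "\<And>s a. s \<in> S \<Longrightarrow> a \<in> A \<Longrightarrow> m s a \<in> E"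
    and sum0: "(\<Sum>s\<in>S. (\<Sum>b\<in>B. l s b * b) * (\<Sum>a\<in>A. m s a * a)) = 0"
    and ab: "a \<in> A" "b \<in> B"
  shows "(\<Sum>s\<in>S. l s b * m s a) = 0"
proof -
  define co where "co p = (\<Sum>s\<in>S. l s (snd p) * m s (fst p))" for p
  have "(\<Sum>s\<in>S. (\<Sum>b\<in>B. l s b * b) * (\<Sum>a\<in>A. m s a * a)) =
      (\<Sum>s\<in>S. \<Sum>a\<in>A. \<Sum>b\<in>B. (l s b * m s a) * (a * b))"
    by (subst sum_product, subst sum.swap) (simp add: ac_simps)
  also have "\<dots> = (\<Sum>a\<in>A. \<Sum>b\<in>B. co (a, b) * (a * b))"
    by (simp add: co_def sum_distrib_right sum.swap[of _ S] sum.swap[of _ S B])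
  also have "\<dots> = (\<Sum>p\<in>A \<times> B. co p * (case p of (a, b) \<Rightarrow> a * b))"
    by (simp add: sum.cartesian_product case_prod_beta)
  finally have "(\<Sum>p\<in>A \<times> B. co p * (case p of (a, b) \<Rightarrow> a * b)) = 0" using sum0 by simp
  moreover have "co p \<in> E" if "p \<in> A \<times> B" for p
    using that l m unfolding co_def by (auto intro!: subfield_sum[OF E] subfield_mult[OF E])
  ultimately have "co (a, b) = 0" using lin_indep_family_overD[OF prod, of co "(a, b)"] ab by simp
  then show ?thesis by (simp add: co_def)
qed

lemma lin_indep_over_span_products:
  assumes E: "subfield E" and prod: "lin_indep_family_over E (A \<times> B) (\<lambda>(a, b). a * b)"
    and SA: "S \<subseteq> span_over E A" and S: "lin_indep_over E S"
  shows "lin_indep_over (span_over E B) S"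
  unfolding lin_indep_over_def
proof (intro conjI allI impI ballI)
  show "finite S" using S by (rule lin_indep_over_finite)
  fix g s0 assume g: "\<forall>s\<in>S. g s \<in> span_over E B" and sum0: "(\<Sum>s\<in>S. g s * s) = 0" and s0: "s0 \<in> S"
  have "\<forall>s\<in>S. \<exists>m. (\<forall>a\<in>A. m a \<in> E) \<and> (\<Sum>a\<in>A. m a * a) = s"
    using SA unfolding span_over_def by blast
  then obtain m where m: "\<forall>s\<in>S. (\<forall>a\<in>A. m s a \<in> E) \<and> (\<Sum>a\<in>A. m s a * a) = s"
    by (rule bchoice[THEN exE])
  have "\<forall>s\<in>S. \<exists>l. (\<forall>b\<in>B. l b \<in> E) \<and> g s = (\<Sum>b\<in>B. l b * b)"
    using g unfolding span_over_def by blast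
  then obtain l where l: "\<forall>s\<in>S. (\<forall>b\<in>B. l s b \<in> E) \<and> g s = (\<Sum>b\<in>B. l s b * b)"
    by (rule bchoice[THEN exE])
  have "(\<Sum>s\<in>S. (\<Sum>b\<in>B. l s b * b) * (\<Sum>a\<in>A. m s a * a)) = (\<Sum>s\<in>S. g s * s)"
    using l m by (intro sum.cong) auto
  then have co0: "(\<Sum>s\<in>S. l s b * m s a) = 0" if "a \<in> A" "b \<in> B" for a b
    using lin_indep_family_over_products_coeffs[OF E prod, of S l m] l m sum0 that by simp
  have "l s b = 0" if b: "b \<in> B" and s: "s \<in> S" for s b
  proof -
    have "(\<Sum>s\<in>S. l s b * s) = (\<Sum>s\<in>S. \<Sum>a\<in>A. (l s b * m s a) * a)"
      using m by (intro sum.cong) (auto simp: sum_distrib_left[symmetric] mult.assoc)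
    also have "\<dots> = (\<Sum>a\<in>A. (\<Sum>s\<in>S. l s b * m s a) * a)"
      by (subst sum.swap) (simp add: sum_distrib_right)
    also have "\<dots> = 0" using co0 b by simp
    finally show ?thesis using lin_indep_overD[OF S, of "\<lambda>s. l s b" s] l b s by simp
  qed
  then show "g s0 = 0" using l s0 by force
qed

lemma lin_disjoint_base_change:
  assumes K: "subfield K" and K': "subfield K'" and KK': "K \<subseteq> K'" and alg: "\<forall>x. algebraic_over K x"
    and A: "finite_ext K A" and F: "finite_ext K F" and AF: "lin_disjoint K A F"
    and N: "subfield N" "A \<subseteq> N" "F \<subseteq> N" and NK': "lin_disjoint K N K'"
  shows "lin_disjoint K' (compositum A K') (compositum F K')"
proof -
  have AF_sub: "subfield A" "K \<subseteq> A" "subfield F" "K \<subseteq> F" using A F by (auto simp: finite_ext_def)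
  obtain BA BF where BA: "is_basis_over K A BA" and BF: "is_basis_over K F BF"
    using A F by (auto simp: finite_ext_def)
  have BA_F: "lin_indep_over F BA"
    by (rule lin_disjoint_basis_indep[OF AF BA order_refl])
  let ?v = "\<lambda>(a, b). a * b"
  have prodK: "lin_indep_family_over K (BA \<times> BF) ?v"
    by (rule lin_indep_family_over_products[OF K AF_sub(3,4) BA_F is_basis_over_subset[OF BF]
          is_basis_over_indep[OF BF]])
  have inj: "inj_on ?v (BA \<times> BF)" by (rule inj_on_lin_indep_family_over[OF prodK K])
  have "BA \<subseteq> N" "BF \<subseteq> N"
    using is_basis_over_subset[OF BA] is_basis_over_subset[OF BF] N(2,3) by (blast intro: order_trans)+
  then have "?v ` (BA \<times> BF) \<subseteq> N" using subfield_mult[OF N(1)] by auto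
  then have "lin_indep_family_over K' (BA \<times> BF) ?v"
    using NK' prodK lin_indep_family_over_iff_image[OF inj] unfolding lin_disjoint_def by blast
  moreover have "compositum A K' = span_over K' BA" "compositum F K' = span_over K' BF"
    by (rule compositum_eq_span_over[OF K K' KK' AF_sub(1) BA alg],
        rule compositum_eq_span_over[OF K K' KK' AF_sub(3) BF alg])
  ultimately show ?thesis
    unfolding lin_disjoint_def
    using lin_indep_over_span_products[OF K']
    by simp
qed

section \<open>Automorphisms and Galois closures\<close>

lemma Aut_over_bij: "\<sigma> \<in> Aut_over E L \<Longrightarrow> bij_betw \<sigma> L L"
  by (simp add: Aut_over_def)

lemma Aut_over_add: "\<sigma> \<in> Aut_over E L \<Longrightarrow> x \<in> L \<Longrightarrow> y \<in> L \<Longrightarrow> \<sigma> (x + y) = \<sigma> x + \<sigma> y"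
  by (simp add: Aut_over_def)

lemma Aut_over_mult: "\<sigma> \<in> Aut_over E L \<Longrightarrow> x \<in> L \<Longrightarrow> y \<in> L \<Longrightarrow> \<sigma> (x * y) = \<sigma> x * \<sigma> y"
  by (simp add: Aut_over_def)

lemma Aut_over_fixed: "\<sigma> \<in> Aut_over E L \<Longrightarrow> x \<in> E \<Longrightarrow> \<sigma> x = x"
  by (simp add: Aut_over_def)

lemma Aut_over_mem: "\<sigma> \<in> Aut_over E L \<Longrightarrow> x \<in> L \<Longrightarrow> \<sigma> x \<in> L"
  using Aut_over_bij bij_betwE by blast

lemma Aut_over_inj: "\<sigma> \<in> Aut_over E L \<Longrightarrow> inj_on \<sigma> L"
  using Aut_over_bij bij_betw_imp_inj_on by blast

lemma Aut_over_0: "\<sigma> \<in> Aut_over E L \<Longrightarrow> 0 \<in> L \<Longrightarrow> \<sigma> 0 = 0"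
  using Aut_over_add[of \<sigma> E L 0 0] by (metis add_0 add_cancel_right_right)

lemma Aut_over_uminus: "\<sigma> \<in> Aut_over E L \<Longrightarrow> subfield L \<Longrightarrow> x \<in> L \<Longrightarrow> \<sigma> (- x) = - \<sigma> x"
  using Aut_over_add[of \<sigma> E L x "- x"] Aut_over_0[of \<sigma> E L] subfield_uminus[of L x] subfield_0[of L]
  by (simp add: eq_neg_iff_add_eq_0 add.commute)

lemma Aut_over_sum:
  assumes \<sigma>: "\<sigma> \<in> Aut_over E L" and L: "subfield L"
  shows "(\<And>i. i \<in> I \<Longrightarrow> f i \<in> L) \<Longrightarrow> \<sigma> (sum f I) = (\<Sum>i\<in>I. \<sigma> (f i))"
proof (induction I rule: infinite_finite_induct)
  case (insert i I)
  then have "sum f I \<in> L" by (intro subfield_sum[OF L]) auto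
  then show ?case using insert Aut_over_add[OF \<sigma>] by simp
qed (use Aut_over_0[OF \<sigma> subfield_0[OF L]] in simp_all)

lemma id_Aut_over: "id \<in> Aut_over E L"
  by (simp add: Aut_over_def)

lemma comp_Aut_over:
  assumes \<sigma>: "\<sigma> \<in> Aut_over E L" and \<tau>: "\<tau> \<in> Aut_over E L"
  shows "\<sigma> \<circ> \<tau> \<in> Aut_over E L"
  using bij_betw_trans[OF Aut_over_bij[OF \<tau>] Aut_over_bij[OF \<sigma>]] Aut_over_add[OF \<sigma>] Aut_over_mult[OF \<sigma>]
    Aut_over_add[OF \<tau>] Aut_over_mult[OF \<tau>] Aut_over_mem[OF \<tau>] Aut_over_fixed[OF \<sigma>] Aut_over_fixed[OF \<tau>]
  by (simp add: Aut_over_def)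

lemma inv_into_Aut_over:
  assumes \<sigma>: "\<sigma> \<in> Aut_over E L" and EL: "E \<subseteq> L" and L: "subfield L"
  shows "inv_into L \<sigma> \<in> Aut_over E L"
proof -
  let ?\<tau> = "inv_into L \<sigma>"
  have bij: "bij_betw \<sigma> L L" by (rule Aut_over_bij[OF \<sigma>])
  have \<tau>\<sigma>: "?\<tau> (\<sigma> x) = x" if "x \<in> L" for x using bij_betw_inv_into_left[OF bij that] .
  have \<sigma>\<tau>: "\<sigma> (?\<tau> x) = x" if "x \<in> L" for x using bij_betw_inv_into_right[OF bij that] .
  have \<tau>L: "?\<tau> x \<in> L" if "x \<in> L" for x using bij_betwE[OF bij_betw_inv_into[OF bij]] that by blast
  have "?\<tau> (x + y) = ?\<tau> x + ?\<tau> y" if "x \<in> L" "y \<in> L" for x y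
  proof -
    have "x + y = \<sigma> (?\<tau> x + ?\<tau> y)" using Aut_over_add[OF \<sigma> \<tau>L \<tau>L] \<sigma>\<tau> that by simp
    then show ?thesis using \<tau>\<sigma> subfield_add[OF L \<tau>L \<tau>L] that by simp
  qed
  moreover have "?\<tau> (x * y) = ?\<tau> x * ?\<tau> y" if "x \<in> L" "y \<in> L" for x y
  proof -
    have "x * y = \<sigma> (?\<tau> x * ?\<tau> y)" using Aut_over_mult[OF \<sigma> \<tau>L \<tau>L] \<sigma>\<tau> that by simp
    then show ?thesis using \<tau>\<sigma> subfield_mult[OF L \<tau>L \<tau>L] that by simp
  qed
  moreover have "?\<tau> x = x" if "x \<in> E" for x using \<tau>\<sigma>[of x] Aut_over_fixed[OF \<sigma> that] that EL by auto
  ultimately show ?thesis using bij_betw_inv_into[OF bij] by (simp add: Aut_over_def)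
qed

lemma Aut_over_poly:
  assumes \<sigma>: "\<sigma> \<in> Aut_over K R" and R: "subfield R" and KR: "K \<subseteq> R" and y: "y \<in> R"
  shows "(\<forall>i. coeff p i \<in> K) \<Longrightarrow> \<sigma> (poly p y) = poly p (\<sigma> y)"
proof (induction p rule: pCons_induct)
  case 0
  then show ?case using Aut_over_0[OF \<sigma> subfield_0[OF R]] by simp
next
  case (pCons a p)
  have aK: "a \<in> K" and pK: "\<forall>i. coeff p i \<in> K"
    using pCons.prems[rule_format, of 0] pCons.prems[rule_format, of "Suc _"] by simp_all
  have "poly p y \<in> R"
    by (rule poly_mem_closed[OF subfield_0[OF R] subfield_add[OF R] subfield_mult[OF R] KR y pK])
  then have "\<sigma> (poly (pCons a p) y) = \<sigma> a + \<sigma> y * \<sigma> (poly p y)"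
    using Aut_over_add[OF \<sigma>] Aut_over_mult[OF \<sigma>] aK KR y subfield_mult[OF R] by auto
  then show ?case using pCons.IH[OF pK] Aut_over_fixed[OF \<sigma> aK] by simp
qed

lemma Aut_over_coeff_prod_linear:
  assumes \<tau>: "\<tau> \<in> Aut_over K R" and R: "subfield R" and K: "subfield K"
  shows "finite Z \<Longrightarrow> Z \<subseteq> R \<Longrightarrow> (\<forall>n. coeff (\<Prod>z\<in>Z. [:- z, 1:]) n \<in> R) \<and>
     (\<forall>n. \<tau> (coeff (\<Prod>z\<in>Z. [:- z, 1:]) n) = coeff (\<Prod>z\<in>Z. [:- \<tau> z, 1:]) n)"
proof (induction Z rule: finite_induct)
  case empty
  have "\<tau> (coeff 1 n) = coeff 1 n" "coeff (1::'a poly) n \<in> R" for n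
    using Aut_over_fixed[OF \<tau> subfield_0[OF K]] Aut_over_fixed[OF \<tau> subfield_1[OF K]]
      subfield_0[OF R] subfield_1[OF R] by (cases n; simp)+
  then show ?case by simp
next
  case (insert z Z)
  define P where "P = (\<Prod>z\<in>Z. [:- z, 1:])"
  define P' where "P' = (\<Prod>z\<in>Z. [:- \<tau> z, 1:])"
  have zR: "z \<in> R" using insert.prems by simp
  have PR: "\<And>n. coeff P n \<in> R" and \<tau>P: "\<And>n. \<tau> (coeff P n) = coeff P' n"
    using insert.IH insert.prems by (auto simp: P_def P'_def)
  have linR: "coeff [:- z, 1:] i \<in> R" for i
    using zR by (cases i) (auto simp: subfield_0[OF R] subfield_1[OF R] subfield_uminus[OF R] coeff_pCons
      split: nat.split)
  have \<tau>lin: "\<tau> (coeff [:- z, 1:] i) = coeff [:- \<tau> z, 1:] i" for i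
    using Aut_over_uminus[OF \<tau> R zR] Aut_over_fixed[OF \<tau> subfield_0[OF K]] Aut_over_fixed[OF \<tau> subfield_1[OF K]]
    by (cases i) (simp_all add: coeff_pCons split: nat.split)
  have mem: "coeff ([:- z, 1:] * P) n \<in> R" for n
    unfolding coeff_mult using linR PR by (intro subfield_sum[OF R] subfield_mult[OF R])
  have "\<tau> (coeff ([:- z, 1:] * P) n) = coeff ([:- \<tau> z, 1:] * P') n" for n
  proof -
    have "\<tau> (coeff ([:- z, 1:] * P) n) = (\<Sum>i\<le>n. \<tau> (coeff [:- z, 1:] i * coeff P (n - i)))"
      unfolding coeff_mult using linR PR by (intro Aut_over_sum[OF \<tau> R] subfield_mult[OF R])
    also have "\<dots> = (\<Sum>i\<le>n. coeff [:- \<tau> z, 1:] i * coeff P' (n - i))"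
      using Aut_over_mult[OF \<tau> linR PR] \<tau>lin \<tau>P by simp
    finally show ?thesis by (simp only: coeff_mult)
  qed
  then show ?case using mem insert.hyps by (simp add: P_def P'_def)
qed

lemma galois_ext_normal:
  assumes K: "subfield K" and N: "galois_ext K N" and yN: "y \<in> N" and alg: "algebraic_over K y"
  obtains q where "\<forall>i. coeff q i \<in> K" "poly q y = 0" "{x. poly q x = 0} \<subseteq> N"
proof -
  have NF: "subfield N" and KN: "K \<subseteq> N" and fixf: "{x\<in>N. \<forall>\<tau>\<in>Aut_over K N. \<tau> x = x} = K"
    using N by (auto simp: galois_ext_def finite_ext_def)
  define Orb where "Orb = (\<lambda>\<tau>. \<tau> y) ` Aut_over K N"
  obtain p where p: "p \<noteq> 0" "\<forall>i. coeff p i \<in> K" "poly p y = 0"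
    using alg unfolding algebraic_over_def by blast
  have "Orb \<subseteq> {x. poly p x = 0}"
    using Aut_over_poly[OF _ NF KN yN p(2)] p(3) Aut_over_0[OF _ subfield_0[OF NF]] by (auto simp: Orb_def)
  then have finOrb: "finite Orb" using poly_roots_finite[OF p(1)] by (rule finite_subset)
  have OrbN: "Orb \<subseteq> N" using Aut_over_mem[of _ K N y] yN by (auto simp: Orb_def)
  have yOrb: "y \<in> Orb" unfolding Orb_def using id_Aut_over[of K N] by (metis id_apply image_eqI)
  \<comment> \<open>\<open>Aut(N/K)\<close> permutes the orbit, so it fixes the coefficients of its polynomial\<close>
  define q where "q = (\<Prod>z\<in>Orb. [:- z, 1:])"
  have roots: "poly q x = 0 \<longleftrightarrow> x \<in> Orb" for x
    using finOrb by (simp add: q_def poly_prod prod_zero_iff)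
  have "coeff q n \<in> K" for n
  proof -
    have "\<tau> (coeff q n) = coeff q n" if \<tau>: "\<tau> \<in> Aut_over K N" for \<tau>
    proof -
      have inj: "inj_on \<tau> Orb" using Aut_over_inj[OF \<tau>] OrbN inj_on_subset by blast
      have "\<tau> ` Orb \<subseteq> Orb"
      proof
        fix x assume "x \<in> \<tau> ` Orb"
        then obtain \<rho> where "\<rho> \<in> Aut_over K N" "x = (\<tau> \<circ> \<rho>) y" by (auto simp: Orb_def)
        then show "x \<in> Orb" using comp_Aut_over[OF \<tau>] unfolding Orb_def by blast
      qed
      then have perm: "\<tau> ` Orb = Orb" by (rule endo_inj_surj[OF finOrb _ inj])
      have "\<tau> (coeff q n) = coeff (\<Prod>z\<in>Orb. [:- \<tau> z, 1:]) n"
        using Aut_over_coeff_prod_linear[OF \<tau> NF K finOrb OrbN] by (simp add: q_def)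
      also have "(\<Prod>z\<in>Orb. [:- \<tau> z, 1:]) = q"
        using prod.reindex[OF inj, of "\<lambda>z. [:- z, 1:]"] perm by (simp add: q_def)
      finally show ?thesis .
    qed
    moreover have "coeff q n \<in> N"
      using Aut_over_coeff_prod_linear[OF id_Aut_over NF K finOrb OrbN] by (simp add: q_def)
    ultimately show ?thesis using fixf by blast
  qed
  then show ?thesis using that roots yOrb OrbN by blast
qed

lemma Aut_over_image_galois_ext:
  assumes K: "subfield K" and N: "galois_ext K N" and \<sigma>: "\<sigma> \<in> Aut_over K N'" and N': "subfield N'"
    and KN': "K \<subseteq> N'" and y: "y \<in> N" "y \<in> N'" and alg: "algebraic_over K y"
  shows "\<sigma> y \<in> N"
proof -
  obtain q where q: "\<forall>i. coeff q i \<in> K" "poly q y = 0" "{x. poly q x = 0} \<subseteq> N"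
    using galois_ext_normal[OF K N y(1) alg] by blast
  have "poly q (\<sigma> y) = \<sigma> (poly q y)" using Aut_over_poly[OF \<sigma> N' KN' y(2) q(1)] by simp
  also have "\<dots> = 0" using q(2) Aut_over_0[OF \<sigma> subfield_0[OF N']] by simp
  finally show ?thesis using q(3) by blast
qed

lemma Aut_over_restrict:
  assumes \<sigma>: "\<sigma> \<in> Aut_over K N" and N: "subfield N" and KN: "K \<subseteq> N" and LN: "L \<subseteq> N"
    and stable: "\<And>\<tau>. \<tau> \<in> Aut_over K N \<Longrightarrow> \<tau> ` L \<subseteq> L"
  shows "\<sigma> \<in> Aut_over K L"
proof -
  have bij: "bij_betw \<sigma> N N" by (rule Aut_over_bij[OF \<sigma>])
  have "bij_betw \<sigma> L L"
  proof (rule bij_betw_byWitness[where f' = "inv_into N \<sigma>"])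
    show "\<forall>a\<in>L. inv_into N \<sigma> (\<sigma> a) = a" using bij_betw_inv_into_left[OF bij] LN by blast
    show "\<forall>a\<in>L. \<sigma> (inv_into N \<sigma> a) = a" using bij_betw_inv_into_right[OF bij] LN by blast
    show "\<sigma> ` L \<subseteq> L" by (rule stable[OF \<sigma>])
    show "inv_into N \<sigma> ` L \<subseteq> L" by (rule stable[OF inv_into_Aut_over[OF \<sigma> KN N]])
  qed
  then show ?thesis using \<sigma> LN unfolding Aut_over_def by (auto simp: subset_iff)
qed

lemma Aut_over_image_galois_closure:
  assumes K: "subfield K" and alg: "\<forall>x. algebraic_over K x" and N: "galois_ext K N" "L \<subseteq> N"
    and \<sigma>: "\<sigma> \<in> Aut_over K N"
  shows "\<sigma> ` galois_closure K L \<subseteq> galois_closure K L"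
proof
  have NF: "subfield N" and KN: "K \<subseteq> N" using N(1) by (auto simp: galois_ext_def finite_ext_def)
  fix x assume "x \<in> \<sigma> ` galois_closure K L"
  then obtain y where y: "y \<in> galois_closure K L" "x = \<sigma> y" by blast
  have yN: "y \<in> N" using y(1) galois_closure_least[OF N] by auto
  have "\<sigma> y \<in> N'" if N': "galois_ext K N'" "L \<subseteq> N'" for N'
  proof -
    have "y \<in> N'" using y(1) galois_closure_least[OF N'] by auto
    then show ?thesis using Aut_over_image_galois_ext[OF K N'(1) \<sigma> NF KN _ yN alg[rule_format]] by blast
  qed
  then show "x \<in> galois_closure K L" using y(2) unfolding galois_closure_def by blast
qed

lemma galois_ext_galois_closure:
  assumes K: "subfield K" and alg: "\<forall>x. algebraic_over K x" and ne: "galois_closure K L \<noteq> UNIV"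
  shows "galois_ext K (galois_closure K L)"
proof -
  let ?Lt = "galois_closure K L"
  obtain N where N: "galois_ext K N" "L \<subseteq> N"
    using ne unfolding galois_closure_def by auto
  have LtN: "?Lt \<subseteq> N" using galois_closure_least[OF N] .
  have KLt: "K \<subseteq> ?Lt" unfolding galois_closure_def galois_ext_def finite_ext_def by blast
  have Nfe: "finite_ext K N" and fixN: "{x\<in>N. \<forall>\<sigma>\<in>Aut_over K N. \<sigma> x = x} = K"
    using N(1) by (auto simp: galois_ext_def)
  have NF: "subfield N" and KN: "K \<subseteq> N" using Nfe by (auto simp: finite_ext_def)
  have "x \<in> K" if x: "x \<in> ?Lt" "\<forall>\<sigma>\<in>Aut_over K ?Lt. \<sigma> x = x" for x
  proof (rule ccontr)
    assume "x \<notin> K"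
    moreover have "x \<in> N" using x(1) LtN by auto
    ultimately obtain \<sigma> where \<sigma>: "\<sigma> \<in> Aut_over K N" "\<sigma> x \<noteq> x" using fixN by blast
    then have "\<sigma> \<in> Aut_over K ?Lt"
      by (intro Aut_over_restrict[OF _ NF KN LtN Aut_over_image_galois_closure[OF K alg N]])
    then show False using x(2) \<sigma>(2) by blast
  qed
  then have "{x\<in>?Lt. \<forall>\<sigma>\<in>Aut_over K ?Lt. \<sigma> x = x} = K" using KLt Aut_over_fixed by blast
  moreover have "finite_ext K ?Lt"
    by (rule finite_ext_intermediate[OF Nfe subfield_galois_closure KLt LtN])
  ultimately show ?thesis by (simp add: galois_ext_def)
qed

section \<open>Base change of a Galois extension\<close>

text \<open>Every \<open>\<sigma> \<in> Aut(F/K)\<close> extends \<open>K'\<close>-linearly along the \<open>K\<close>-basis \<open>B\<close> of \<open>F\<close>, which stays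
  a basis of \<open>F K'\<close> over \<open>K'\<close>, to the automorphism \<open>lift \<sigma>\<close> of \<open>F K'/K'\<close>. Their common fixed
  field is \<open>K'\<close> because the \<open>K\<close>-basis \<open>C\<close> of \<open>K'\<close> stays independent over \<open>F\<close>.\<close>

locale galois_base_change =
  fixes K K' F B C :: "'a::field set"
  assumes K: "subfield K" and K': "subfield K'" and KK': "K \<subseteq> K'"
    and galois: "galois_ext K F" and B: "is_basis_over K F B" and B_indep: "lin_indep_over K' B"
    and C: "is_basis_over K K' C" and alg: "\<forall>x. algebraic_over K x"
begin

definition coord :: "'a \<Rightarrow> 'a \<Rightarrow> 'a" where
  "coord x = (SOME c. (\<forall>b\<in>B. c b \<in> K') \<and> x = (\<Sum>b\<in>B. c b * b))"

definition lift :: "('a \<Rightarrow> 'a) \<Rightarrow> 'a \<Rightarrow> 'a" where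
  "lift \<sigma> x = (\<Sum>b\<in>B. coord x b * \<sigma> b)"

lemma subfield_F: "subfield F" and K_subset_F: "K \<subseteq> F"
  using galois by (auto simp: galois_ext_def finite_ext_def)

lemma compositum_eq: "compositum F K' = span_over K' B"
  by (rule compositum_eq_span_over[OF K K' KK' subfield_F B alg])

lemma coord:
  assumes "x \<in> compositum F K'"
  shows "\<forall>b\<in>B. coord x b \<in> K'" "x = (\<Sum>b\<in>B. coord x b * b)"
proof -
  have "\<exists>c. (\<forall>b\<in>B. c b \<in> K') \<and> x = (\<Sum>b\<in>B. c b * b)"
    using assms unfolding compositum_eq span_over_def by blast
  then have "(\<forall>b\<in>B. coord x b \<in> K') \<and> x = (\<Sum>b\<in>B. coord x b * b)"
    unfolding coord_def by (rule someI_ex)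
  then show "\<forall>b\<in>B. coord x b \<in> K'" "x = (\<Sum>b\<in>B. coord x b * b)" by simp_all
qed

lemma coord_unique:
  assumes c: "\<forall>b\<in>B. c b \<in> K'" and b: "b \<in> B"
  shows "coord (\<Sum>b\<in>B. c b * b) b = c b"
proof -
  define x where "x = (\<Sum>b\<in>B. c b * b)"
  have "x \<in> compositum F K'" unfolding compositum_eq x_def by (rule span_overI[OF _ refl]) (use c in auto)
  note cx = coord[OF this]
  have "(\<Sum>b\<in>B. (coord x b - c b) * b) = 0"
    using cx(2) by (simp add: left_diff_distrib sum_subtractf x_def[symmetric])
  moreover have "coord x b - c b \<in> K'" if "b \<in> B" for b
    using cx(1) c that subfield_diff[OF K'] by simp
  ultimately have "coord x b - c b = 0"
    using lin_indep_overD[OF B_indep, of "\<lambda>b. coord x b - c b" b] b by simp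
  then show ?thesis by (simp add: x_def)
qed

lemma lift_basis_combination:
  "\<forall>b\<in>B. c b \<in> K' \<Longrightarrow> lift \<sigma> (\<Sum>b\<in>B. c b * b) = (\<Sum>b\<in>B. c b * \<sigma> b)"
  unfolding lift_def by (simp add: coord_unique)

lemma lift_add:
  assumes "x \<in> compositum F K'" "y \<in> compositum F K'"
  shows "lift \<sigma> (x + y) = lift \<sigma> x + lift \<sigma> y"
proof -
  have "x + y = (\<Sum>b\<in>B. (coord x b + coord y b) * b)"
    using coord(2)[OF assms(1)] coord(2)[OF assms(2)] by (simp add: distrib_right sum.distrib)
  then have "lift \<sigma> (x + y) = lift \<sigma> (\<Sum>b\<in>B. (coord x b + coord y b) * b)" by (rule arg_cong)
  also have "\<dots> = (\<Sum>b\<in>B. (coord x b + coord y b) * \<sigma> b)"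
    using coord(1)[OF assms(1)] coord(1)[OF assms(2)] subfield_add[OF K']
    by (intro lift_basis_combination) blast
  also have "\<dots> = lift \<sigma> x + lift \<sigma> y" by (simp add: lift_def distrib_right sum.distrib)
  finally show ?thesis .
qed

lemma lift_smult:
  assumes e: "e \<in> K'" and x: "x \<in> compositum F K'"
  shows "lift \<sigma> (e * x) = e * lift \<sigma> x"
proof -
  have "e * x = (\<Sum>b\<in>B. (e * coord x b) * b)"
    by (subst coord(2)[OF x]) (simp add: sum_distrib_left mult.assoc)
  then have "lift \<sigma> (e * x) = lift \<sigma> (\<Sum>b\<in>B. (e * coord x b) * b)" by (rule arg_cong)
  also have "\<dots> = (\<Sum>b\<in>B. (e * coord x b) * \<sigma> b)"
    using coord(1)[OF x] subfield_mult[OF K' e] by (intro lift_basis_combination) blast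
  also have "\<dots> = e * lift \<sigma> x" by (simp add: lift_def sum_distrib_left mult.assoc)
  finally show ?thesis .
qed

lemma lift_on_F:
  assumes \<sigma>: "\<sigma> \<in> Aut_over K F" and f: "f \<in> F"
  shows "lift \<sigma> f = \<sigma> f"
proof -
  have "f \<in> span_over K B" using f by (simp add: is_basis_over_span[OF B])
  then obtain c where c: "\<And>b. b \<in> B \<Longrightarrow> c b \<in> K" "f = (\<Sum>b\<in>B. c b * b)"
    by (blast elim: span_overE)
  have cbF: "c b \<in> F" "b \<in> F" if "b \<in> B" for b
    using c(1) that is_basis_over_subset[OF B] K_subset_F by auto
  have "lift \<sigma> f = (\<Sum>b\<in>B. c b * \<sigma> b)"
    unfolding c(2) using c(1) KK' by (intro lift_basis_combination) auto
  also have "\<dots> = (\<Sum>b\<in>B. \<sigma> (c b * b))"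
    using Aut_over_mult[OF \<sigma> cbF] Aut_over_fixed[OF \<sigma> c(1)] by simp
  also have "\<dots> = \<sigma> f"
    unfolding c(2) using cbF by (intro Aut_over_sum[OF \<sigma> subfield_F, symmetric] subfield_mult[OF subfield_F])
  finally show ?thesis .
qed

lemma lift_combination:
  assumes \<sigma>: "\<sigma> \<in> Aut_over K F" and c: "\<And>i. i \<in> I \<Longrightarrow> c i \<in> K'" and f: "\<And>i. i \<in> I \<Longrightarrow> f i \<in> F"
  shows "lift \<sigma> (\<Sum>i\<in>I. c i * f i) = (\<Sum>i\<in>I. c i * \<sigma> (f i))"
  using c f
proof (induction I rule: infinite_finite_induct)
  case (infinite I)
  then show ?case using lift_basis_combination[of "\<lambda>_. 0"] subfield_0[OF K'] by simp
next
  case empty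
  then show ?case using lift_basis_combination[of "\<lambda>_. 0"] subfield_0[OF K'] by simp
next
  case (insert i I)
  have mem: "c j * f j \<in> compositum F K'" if "j \<in> insert i I" for j
  proof (rule subfield_mult[OF subfield_compositum])
    show "c j \<in> compositum F K'" "f j \<in> compositum F K'"
      using insert.prems that subset_compositum1[of F K'] subset_compositum2[of K' F] by auto
  qed
  then have "(\<Sum>j\<in>I. c j * f j) \<in> compositum F K'"
    by (intro subfield_sum[OF subfield_compositum]) auto
  then have "lift \<sigma> (\<Sum>j\<in>insert i I. c j * f j) = lift \<sigma> (c i * f i) + lift \<sigma> (\<Sum>j\<in>I. c j * f j)"
    using insert.hyps lift_add mem by simp
  also have "lift \<sigma> (c i * f i) = c i * \<sigma> (f i)"
  proof -
    have "c i \<in> K'" "f i \<in> F" using insert.prems by auto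
    moreover from this have "f i \<in> compositum F K'" using subset_compositum1[of F K'] by auto
    ultimately show ?thesis using lift_smult lift_on_F[OF \<sigma>] by simp
  qed
  finally show ?case using insert by simp
qed

lemma lift_mem:
  assumes \<sigma>: "\<sigma> \<in> Aut_over K F" and x: "x \<in> compositum F K'"
  shows "lift \<sigma> x \<in> compositum F K'"
  unfolding lift_def
proof (intro subfield_sum[OF subfield_compositum] subfield_mult[OF subfield_compositum])
  fix b assume b: "b \<in> B"
  show "coord x b \<in> compositum F K'" using coord(1)[OF x] b subset_compositum2[of K' F] by auto
  show "\<sigma> b \<in> compositum F K'" using Aut_over_mem[OF \<sigma>] b is_basis_over_subset[OF B] subset_compositum1[of F K'] by auto
qed

lemma lift_mult:
  assumes \<sigma>: "\<sigma> \<in> Aut_over K F" and x: "x \<in> compositum F K'" and y: "y \<in> compositum F K'"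
  shows "lift \<sigma> (x * y) = lift \<sigma> x * lift \<sigma> y"
proof -
  let ?c = "\<lambda>(b, b'). coord x b * coord y b'" and ?f = "\<lambda>(b, b'). b * b'"
  have "x * y = (\<Sum>b\<in>B. \<Sum>b'\<in>B. (coord x b * b) * (coord y b' * b'))"
    by (subst coord(2)[OF x], subst coord(2)[OF y]) (rule sum_product)
  also have "\<dots> = (\<Sum>p\<in>B \<times> B. ?c p * ?f p)"
    by (simp add: sum.cartesian_product case_prod_beta ac_simps)
  finally have xy: "x * y = (\<Sum>p\<in>B \<times> B. ?c p * ?f p)" .
  have "?c p \<in> K'" "?f p \<in> F" if "p \<in> B \<times> B" for p
    using that coord(1)[OF x] coord(1)[OF y] is_basis_over_subset[OF B]
    by (auto intro: subfield_mult[OF K'] subfield_mult[OF subfield_F])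
  then have "lift \<sigma> (x * y) = (\<Sum>p\<in>B \<times> B. ?c p * \<sigma> (?f p))"
    unfolding xy by (rule lift_combination[OF \<sigma>])
  also have "\<dots> = (\<Sum>(b, b')\<in>B \<times> B. (coord x b * \<sigma> b) * (coord y b' * \<sigma> b'))"
  proof (rule sum.cong[OF refl])
    fix p assume "p \<in> B \<times> B"
    then obtain b b' where p: "p = (b, b')" "b \<in> B" "b' \<in> B" by blast
    then have "\<sigma> (b * b') = \<sigma> b * \<sigma> b'"
      using Aut_over_mult[OF \<sigma>] is_basis_over_subset[OF B] by blast
    then show "?c p * \<sigma> (?f p) = (case p of (b, b') \<Rightarrow> (coord x b * \<sigma> b) * (coord y b' * \<sigma> b'))"
      using p(1) by (simp add: ac_simps)
  qed
  also have "\<dots> = (\<Sum>b\<in>B. \<Sum>b'\<in>B. (coord x b * \<sigma> b) * (coord y b' * \<sigma> b'))"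
    by (rule sum.cartesian_product[symmetric])
  also have "\<dots> = lift \<sigma> x * lift \<sigma> y"
    by (simp add: lift_def sum_product)
  finally show ?thesis .
qed

lemma lift_lift:
  assumes \<sigma>: "\<sigma> \<in> Aut_over K F" and \<tau>: "\<tau> \<in> Aut_over K F"
    and \<tau>\<sigma>: "\<And>f. f \<in> F \<Longrightarrow> \<tau> (\<sigma> f) = f" and x: "x \<in> compositum F K'"
  shows "lift \<tau> (lift \<sigma> x) = x"
proof -
  have "\<sigma> b \<in> F" if "b \<in> B" for b using Aut_over_mem[OF \<sigma>] that is_basis_over_subset[OF B] by auto
  then have "lift \<tau> (lift \<sigma> x) = (\<Sum>b\<in>B. coord x b * \<tau> (\<sigma> b))"
    unfolding lift_def[of \<sigma>] using coord(1)[OF x] by (intro lift_combination[OF \<tau>]) auto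
  also have "\<dots> = (\<Sum>b\<in>B. coord x b * b)"
    using \<tau>\<sigma> is_basis_over_subset[OF B] by (intro sum.cong) auto
  also have "\<dots> = x" using coord(2)[OF x] by simp
  finally show ?thesis .
qed

lemma lift_Aut_over:
  assumes \<sigma>: "\<sigma> \<in> Aut_over K F"
  shows "lift \<sigma> \<in> Aut_over K' (compositum F K')"
proof -
  let ?\<tau> = "inv_into F \<sigma>"
  have \<tau>: "?\<tau> \<in> Aut_over K F" by (rule inv_into_Aut_over[OF \<sigma> K_subset_F subfield_F])
  have "bij_betw (lift \<sigma>) (compositum F K') (compositum F K')"
  proof (rule bij_betw_byWitness[where f' = "lift ?\<tau>"])
    show "\<forall>x\<in>compositum F K'. lift ?\<tau> (lift \<sigma> x) = x"
      using lift_lift[OF \<sigma> \<tau>] bij_betw_inv_into_left[OF Aut_over_bij[OF \<sigma>]] by blast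
    show "\<forall>x\<in>compositum F K'. lift \<sigma> (lift ?\<tau> x) = x"
      using lift_lift[OF \<tau> \<sigma>] bij_betw_inv_into_right[OF Aut_over_bij[OF \<sigma>]] by blast
    show "lift \<sigma> ` compositum F K' \<subseteq> compositum F K'" using lift_mem[OF \<sigma>] by blast
    show "lift ?\<tau> ` compositum F K' \<subseteq> compositum F K'" using lift_mem[OF \<tau>] by blast
  qed
  moreover have "lift \<sigma> e = e" if "e \<in> K'" for e
    using lift_smult[OF that, of 1 \<sigma>] lift_on_F[OF \<sigma> subfield_1[OF subfield_F]]
      Aut_over_fixed[OF \<sigma> subfield_1[OF K]] subset_compositum1[of F K'] subfield_1[OF subfield_F] by auto
  ultimately show ?thesis using lift_add lift_mult[OF \<sigma>] by (simp add: Aut_over_def)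
qed

lemma fixed_field:
  assumes x: "x \<in> compositum F K'" and fixed: "\<forall>\<phi>\<in>Aut_over K' (compositum F K'). \<phi> x = x"
  shows "x \<in> K'"
proof -
  have CF: "lin_indep_over F C" by (rule lin_indep_over_basis_swap[OF K K' KK' B B_indep C])
  have CK': "C \<subseteq> K'" by (rule is_basis_over_subset[OF C])
  \<comment> \<open>expand \<open>x\<close> in the \<open>F\<close>-basis \<open>C\<close> of \<open>F K'\<close> and show that its coordinates are \<open>Aut(F/K)\<close>-invariant\<close>
  have "x \<in> span_over F C"
    using x compositum_eq_span_over[OF K subfield_F K_subset_F K' C alg] by (simp add: compositum_commute)
  then obtain f where f: "\<And>e. e \<in> C \<Longrightarrow> f e \<in> F" and xf: "x = (\<Sum>e\<in>C. f e * e)"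
    by (blast elim: span_overE)
  have "f e \<in> K" if e: "e \<in> C" for e
  proof -
    have "\<sigma> (f e) = f e" if \<sigma>: "\<sigma> \<in> Aut_over K F" for \<sigma>
    proof -
      have "(\<Sum>e\<in>C. e * \<sigma> (f e)) = lift \<sigma> (\<Sum>e\<in>C. e * f e)"
        using f CK' by (intro lift_combination[OF \<sigma>, symmetric]) auto
      also have "\<dots> = x" using xf fixed lift_Aut_over[OF \<sigma>] by (simp add: mult.commute)
      finally have "(\<Sum>e\<in>C. (\<sigma> (f e) - f e) * e) = 0"
        using xf by (simp add: algebra_simps sum_subtractf)
      moreover have "\<sigma> (f e) - f e \<in> F" if "e \<in> C" for e
        using f[OF that] Aut_over_mem[OF \<sigma>] subfield_diff[OF subfield_F] by blast
      ultimately show ?thesis using lin_indep_overD[OF CF, of "\<lambda>e. \<sigma> (f e) - f e" e] e by simp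
    qed
    then show ?thesis using galois f[OF e] by (auto simp: galois_ext_def)
  qed
  then show "x \<in> K'" unfolding xf using f CK' KK' by (intro subfield_sum[OF K'] subfield_mult[OF K']) auto
qed

lemma galois_ext_compositum: "galois_ext K' (compositum F K')"
proof -
  have "finite_ext K' (compositum F K')"
    by (rule finite_ext_compositum[OF K' is_basis_over_compositum[OF K K' KK' subfield_F B alg B_indep]])
  moreover have "{x \<in> compositum F K'. \<forall>\<phi>\<in>Aut_over K' (compositum F K'). \<phi> x = x} = K'"
    using fixed_field subset_compositum2[of K' F] Aut_over_fixed by blast
  ultimately show ?thesis by (simp add: galois_ext_def)
qed

end

lemma galois_ext_compositum_lin_disjoint:
  assumes K: "subfield K" and alg: "\<forall>x. algebraic_over K x" and K': "finite_ext K K'"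
    and A: "galois_ext K A" and disj: "lin_disjoint K N K'" and AN: "A \<subseteq> N"
  shows "galois_ext K' (compositum A K')"
proof -
  obtain C where C: "is_basis_over K K' C" using K' by (auto simp: finite_ext_def)
  obtain B where B: "is_basis_over K A B" using A by (auto simp: galois_ext_def finite_ext_def)
  interpret galois_base_change K K' A B C
    using K K' A B lin_disjoint_basis_indep[OF disj B AN] C alg by unfold_locales (auto simp: finite_ext_def)
  show ?thesis by (rule galois_ext_compositum)
qed

section \<open>Strong cluster magnification\<close>

lemma scm_via_compositum_galois:
  assumes K: "subfield K" and alg: "\<forall>x. algebraic_over K x" and K'_gal: "galois_ext K K'"
    and X: "finite_ext K X" and deg: "ext_degree K X > 2"
    and disj: "lin_disjoint K (galois_closure K X) K'"
  shows "scm_via K X (compositum X K') K'"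
proof -
  have K'fe: "finite_ext K K'" using K'_gal by (simp add: galois_ext_def)
  then have K': "subfield K'" and KK': "K \<subseteq> K'" by (auto simp: finite_ext_def)
  have "finite_ext K' (compositum X K')"
    by (rule finite_ext_base_change(1)[OF K K' KK' alg X disj subset_galois_closure])
  then have "finite_ext K (compositum X K')" by (rule finite_ext_compositum_over_base[OF K'fe])
  then show ?thesis
    using X deg K'_gal disj subset_compositum1[of X K'] unfolding scm_via_def by blast
qed

lemma scm_via_base_change:
  assumes K: "subfield K" and alg: "\<forall>x. algebraic_over K x" and K'_gal: "galois_ext K K'"
    and scm: "scm_via K L M F" and FK: "F \<noteq> K"
    and disj: "lin_disjoint K (galois_closure K M) K'"
  shows "scm_via K' (compositum L K') (compositum M K') (compositum F K')"
    "compositum F K' \<noteq> K'" "ext_degree K' (compositum F K') = ext_degree K F"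
proof -
  have L: "finite_ext K L" and M: "finite_ext K M" and LM: "L \<subseteq> M" and degL: "ext_degree K L > 2"
    and F_gal: "galois_ext K F" and disjLF: "lin_disjoint K (galois_closure K L) F"
    and LFM: "compositum L F = M"
    using scm by (auto simp: scm_via_def)
  have K'fe: "finite_ext K K'" using K'_gal by (simp add: galois_ext_def)
  then have K': "subfield K'" and KK': "K \<subseteq> K'" by (auto simp: finite_ext_def)
  have F: "finite_ext K F" using F_gal by (simp add: galois_ext_def)
  then have F_sub: "subfield F" "K \<subseteq> F" by (auto simp: finite_ext_def)
  let ?Lt = "galois_closure K L" and ?Mt = "galois_closure K M"
  have MMt: "M \<subseteq> ?Mt" by (rule subset_galois_closure)
  have FMt: "F \<subseteq> ?Mt" using subset_compositum2[of F L] LFM MMt by auto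
  have LtMt: "?Lt \<subseteq> ?Mt" by (rule galois_closure_mono[OF LM])
  have "F \<subseteq> K" if "?Lt = UNIV"
    using lin_disjoint_Int_subset[OF disjLF K F_sub(1)] that by auto
  then have "?Lt \<noteq> UNIV" using FK F_sub(2) by blast
  then have Lt_gal: "galois_ext K ?Lt" by (rule galois_ext_galois_closure[OF K alg])
  then have Lt: "finite_ext K ?Lt" by (simp add: galois_ext_def)
  have F'_gal: "galois_ext K' (compositum F K')"
    by (rule galois_ext_compositum_lin_disjoint[OF K alg K'fe F_gal disj FMt])
  have Lt'_gal: "galois_ext K' (compositum ?Lt K')"
    by (rule galois_ext_compositum_lin_disjoint[OF K alg K'fe Lt_gal disj LtMt])
  have "galois_closure K' (compositum L K') \<subseteq> compositum ?Lt K'"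
    by (rule galois_closure_least[OF Lt'_gal compositum_mono[OF subset_galois_closure order_refl]])
  moreover have "lin_disjoint K' (compositum ?Lt K') (compositum F K')"
    by (rule lin_disjoint_base_change[OF K K' KK' alg Lt F disjLF subfield_galois_closure LtMt FMt disj])
  ultimately have disj': "lin_disjoint K' (galois_closure K' (compositum L K')) (compositum F K')"
    by (rule lin_disjoint_subset[rotated])
  have "compositum (compositum L K') (compositum F K') = compositum M K'"
    by (simp only: compositum_base_change LFM)
  moreover note base_L = finite_ext_base_change[OF K K' KK' alg L disj order_trans[OF LM MMt]]
  moreover note base_M = finite_ext_base_change[OF K K' KK' alg M disj MMt]
  moreover have "compositum L K' \<subseteq> compositum M K'" by (rule compositum_mono[OF LM order_refl])
  ultimately show "scm_via K' (compositum L K') (compositum M K') (compositum F K')"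
    using degL F'_gal disj' unfolding scm_via_def by simp
  show "ext_degree K' (compositum F K') = ext_degree K F"
    by (rule finite_ext_base_change(2)[OF K K' KK' alg F disj FMt])
  show "compositum F K' \<noteq> K'"
    by (rule compositum_neq_if_lin_disjoint[OF disj K K' subfield_1[OF subfield_galois_closure] FMt F_sub(2) FK])
qed

theorem theorem8p2:
  fixes K K' L M :: "'a::field set" and d :: nat
  assumes closure: "is_alg_closure_of K"
    and K'_gal: "galois_ext K K'"
    and mag: "\<exists>F. scm_via K L M F \<and> F \<noteq> K \<and> ext_degree K F = d"
    and disj: "lin_disjoint K (galois_closure K M) K'"
  shows "(\<exists>F. scm_via K' (compositum L K') (compositum M K') F \<and> F \<noteq> K' \<and> ext_degree K' F = d)
    \<and> (\<exists>F. scm_via K M (compositum M K') F \<and> (ext_degree K K' > 1 \<longrightarrow> F \<noteq> K))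
    \<and> (\<exists>F. scm_via K L (compositum L K') F \<and> (ext_degree K K' > 1 \<longrightarrow> F \<noteq> K))"
proof -
  have K: "subfield K" and alg: "\<forall>x. algebraic_over K x"
    using closure by (auto simp: is_alg_closure_of_def perfect_field_def)
  obtain F where scm: "scm_via K L M F" and FK: "F \<noteq> K" and dF: "ext_degree K F = d"
    using mag by blast
  have L: "finite_ext K L" and M: "finite_ext K M" and LM: "L \<subseteq> M" and degL: "ext_degree K L > 2"
    using scm by (auto simp: scm_via_def)
  note base_change = scm_via_base_change[OF K alg K'_gal scm FK disj]
  have "ext_degree K M > 2" using ext_degree_mono[OF L M LM] degL by simp
  then have scmM: "scm_via K M (compositum M K') K'"
    by (rule scm_via_compositum_galois[OF K alg K'_gal M _ disj])
  have "lin_disjoint K (galois_closure K L) K'"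
    by (rule lin_disjoint_subset[OF disj galois_closure_mono[OF LM]])
  then have scmL: "scm_via K L (compositum L K') K'"
    by (rule scm_via_compositum_galois[OF K alg K'_gal L degL])
  have "ext_degree K K' > 1 \<longrightarrow> K' \<noteq> K" using ext_degree_self[OF K] by auto
  then show ?thesis using base_change dF scmM scmL by blast
qed

end
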